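(* Let $\varphi$ be a smooth real-valued function on a domain $\Omega\subset\mathbb{C}$. Then the following are equivalent: (1) $\sqrt{-1}\partial\overline{\partial}\varphi=0$ on $\Omega$ (i.e. $\varphi$ is harmonic); (2) $L_\varphi\equiv1$ on $\Omega_\delta$; equivalently, for every $a\in\Omega$ and $r\in(0,\delta(a))$ there exists a unique holomorphic function $f$ on $\Delta(a;r)$ with $f(a)=1$ and $\int_{\Delta(a;r)}|f|^2e^{-\varphi}\leq\pi r^2e^{-\varphi(a)}$.
   Context: $\Delta(a;r)=\{z\in\mathbb{C}\mid|z-a|<r\}$; $\delta(a)=\sup\{r>0\mid\Delta(a;r)\subset\Omega\}$; $\Omega_\delta=\{(a,r)\in\Omega\times\mathbb{R}\mid0<r<\delta(a)\}$. $A^2(D,\varphi)$ is the space of holomorphic $f$ on $D$ with $\int_D|f|^2e^{-\varphi}<\infty$ (Lebesgue measure). The $L^2$-extension index is $$L_\varphi(a,r)=\inf\left\{\frac{\int_{\Delta(a;r)}|f|^2e^{-\varphi}}{\pi r^2e^{-\varphi(a)}}\ \middle|\ f\in A^2(\Delta(a;r),\varphi),\ f(a)=1\right\},\quad(a,r)\in\Omega_\delta.$$ *)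

theory Defs
  imports "HOL-Analysis.Analysis"
begin

fun Ck_on :: "nat \<Rightarrow> complex set \<Rightarrow> (complex \<Rightarrow> real) \<Rightarrow> bool" where
  "Ck_on 0 S f = continuous_on S f"
| "Ck_on (Suc n) S f =
     (f differentiable_on S \<and>
      (\<forall>v. Ck_on n S (\<lambda>x. frechet_derivative f (at x) v)))"

definition smooth_on :: "complex set \<Rightarrow> (complex \<Rightarrow> real) \<Rightarrow> bool" where
  "smooth_on S f \<longleftrightarrow> (\<forall>n. Ck_on n S f)"

text \<open>Laplacian: second partial derivatives in the directions 1 and i.
  i d dbar phi = (i/2) (Laplacian phi / 2) dz /\ d(zbar), so it vanishes iff the Laplacian does.\<close>
definition laplacian :: "(complex \<Rightarrow> real) \<Rightarrow> complex \<Rightarrow> real" where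
  "laplacian \<phi> z =
     frechet_derivative (\<lambda>w. frechet_derivative \<phi> (at w) 1) (at z) 1 +
     frechet_derivative (\<lambda>w. frechet_derivative \<phi> (at w) \<i>) (at z) \<i>"

definition harmonic_on :: "complex set \<Rightarrow> (complex \<Rightarrow> real) \<Rightarrow> bool" where
  "harmonic_on \<Omega> \<phi> \<longleftrightarrow> (\<forall>z\<in>\<Omega>. laplacian \<phi> z = 0)"

definition bdist :: "complex set \<Rightarrow> complex \<Rightarrow> ereal" where
  "bdist \<Omega> a = (SUP r \<in> {r::real. r > 0 \<and> ball a r \<subseteq> \<Omega>}. ereal r)"

definition Omega_delta :: "complex set \<Rightarrow> (complex \<times> real) set" where
  "Omega_delta \<Omega> = {(a, r). a \<in> \<Omega> \<and> 0 < r \<and> ereal r < bdist \<Omega> a}"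

definition A2 :: "complex set \<Rightarrow> (complex \<Rightarrow> real) \<Rightarrow> (complex \<Rightarrow> complex) set" where
  "A2 D \<phi> = {f. f holomorphic_on D \<and>
      set_integrable lborel D (\<lambda>z. (cmod (f z))\<^sup>2 * exp (- \<phi> z))}"

definition L_index :: "(complex \<Rightarrow> real) \<Rightarrow> complex \<Rightarrow> real \<Rightarrow> real" where
  "L_index \<phi> a r = Inf
     {(set_lebesgue_integral lborel (ball a r) (\<lambda>z. (cmod (f z))\<^sup>2 * exp (- \<phi> z)))
        / (pi * r\<^sup>2 * exp (- \<phi> a)) | f. f \<in> A2 (ball a r) \<phi> \<and> f a = 1}"

end

theory Submission
  imports Defs "HOL-Complex_Analysis.Complex_Analysis"
begin

lemma lborel_complex_eq_pair:
  "(lborel :: complex measure) = distr (lborel \<Otimes>\<^sub>M lborel) borel (\<lambda>(x, y). Complex x y)"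
proof (rule lborel_eqI)
  fix l u :: complex
  assume le: "\<And>b. b \<in> Basis \<Longrightarrow> l \<bullet> b \<le> u \<bullet> b"
  have "(\<lambda>(x, y). Complex x y) -` box l u \<inter> space (lborel \<Otimes>\<^sub>M lborel) =
        {Re l<..<Re u} \<times> {Im l<..<Im u}"
    by (auto simp: box_def Basis_complex_def space_pair_measure)
  moreover have "(\<lambda>(x, y). Complex x y) \<in> borel_measurable (lborel \<Otimes>\<^sub>M lborel)"
    unfolding case_prod_beta' Complex_eq by measurable
  ultimately show "emeasure (distr (lborel \<Otimes>\<^sub>M lborel) borel (\<lambda>(x, y). Complex x y)) (box l u) =
      (\<Prod>b\<in>Basis. (u - l) \<bullet> b)"
    using le[of 1] le[of \<i>]
    by (simp add: emeasure_distr lborel.emeasure_pair_measure_Times Basis_complex_def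
        ennreal_mult[symmetric] inner_complex_def)
qed simp

lemma nn_integral_lborel_complex:
  assumes [measurable]: "f \<in> borel_measurable borel"
  shows "(\<integral>\<^sup>+ z. f z \<partial>lborel) = (\<integral>\<^sup>+ y. \<integral>\<^sup>+ x. f (Complex x y) \<partial>lborel \<partial>lborel)"
    and "(\<integral>\<^sup>+ z. f z \<partial>lborel) = (\<integral>\<^sup>+ x. \<integral>\<^sup>+ y. f (Complex x y) \<partial>lborel \<partial>lborel)"
proof -
  have m: "(\<lambda>(x, y). Complex x y) \<in> borel_measurable (lborel \<Otimes>\<^sub>M lborel)"
    unfolding case_prod_beta' Complex_eq by measurable
  have pair: "(\<integral>\<^sup>+ z. f z \<partial>lborel) = (\<integral>\<^sup>+ p. f (case p of (x, y) \<Rightarrow> Complex x y) \<partial>(lborel \<Otimes>\<^sub>M lborel))"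
    by (subst lborel_complex_eq_pair) (simp add: nn_integral_distr m)
  then show "(\<integral>\<^sup>+ z. f z \<partial>lborel) = (\<integral>\<^sup>+ y. \<integral>\<^sup>+ x. f (Complex x y) \<partial>lborel \<partial>lborel)"
    by (subst (asm) lborel_pair.nn_integral_snd[symmetric]) (use m in auto)
  from pair show "(\<integral>\<^sup>+ z. f z \<partial>lborel) = (\<integral>\<^sup>+ x. \<integral>\<^sup>+ y. f (Complex x y) \<partial>lborel \<partial>lborel)"
    using lborel.nn_integral_fst[OF measurable_compose[OF m assms]] by (simp add: case_prod_beta')
qed

lemma distr_lborel_eqI:
  fixes T :: "'a::euclidean_space \<Rightarrow> 'a"
  assumes [measurable]: "T \<in> borel_measurable borel"
    and nn: "\<And>f. f \<in> borel_measurable borel \<Longrightarrow> (\<integral>\<^sup>+ z. f (T z) \<partial>lborel) = (\<integral>\<^sup>+ z. f z \<partial>lborel)"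
  shows "distr lborel borel T = lborel"
proof (rule measure_eqI)
  fix A :: "'a set" assume "A \<in> sets (distr lborel borel T)"
  then have [measurable]: "A \<in> sets borel" by simp
  have "emeasure (distr lborel borel T) A = (\<integral>\<^sup>+ z. indicator A z \<partial>distr lborel borel T)"
    by simp
  also have "\<dots> = (\<integral>\<^sup>+ z. indicator A (T z) \<partial>lborel)"
    by (rule nn_integral_distr) simp_all
  also have "\<dots> = emeasure lborel A"
    by (simp add: nn)
  finally show "emeasure (distr lborel borel T) A = emeasure lborel A" .
qed simp

lemma distr_lborel_shear_Re:
  "distr lborel borel (\<lambda>z. z + of_real (t * Im z)) = (lborel :: complex measure)"
proof (rule distr_lborel_eqI)
  fix f :: "complex \<Rightarrow> ennreal" assume [measurable]: "f \<in> borel_measurable borel"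
  have "(\<integral>\<^sup>+ z. f (z + of_real (t * Im z)) \<partial>lborel) =
        (\<integral>\<^sup>+ y. \<integral>\<^sup>+ x. f (Complex (y * t + x) y) \<partial>lborel \<partial>lborel)"
    by (subst nn_integral_lborel_complex(1))
       (simp, intro nn_integral_cong arg_cong[where f = f], simp add: complex_eq_iff)
  also have "\<dots> = (\<integral>\<^sup>+ y. \<integral>\<^sup>+ x. f (Complex x y) \<partial>lborel \<partial>lborel)"
  proof (rule nn_integral_cong)
    fix y
    have "(\<lambda>x. f (Complex x y)) \<in> borel_measurable borel"
      unfolding Complex_eq by measurable
    then show "(\<integral>\<^sup>+ x. f (Complex (y * t + x) y) \<partial>lborel) = (\<integral>\<^sup>+ x. f (Complex x y) \<partial>lborel)"
      using nn_integral_real_affine[of "\<lambda>x. f (Complex x y)" 1 "y * t"] by simp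
  qed
  also have "\<dots> = (\<integral>\<^sup>+ z. f z \<partial>lborel)"
    by (simp add: nn_integral_lborel_complex(1))
  finally show "(\<integral>\<^sup>+ z. f (z + of_real (t * Im z)) \<partial>lborel) = (\<integral>\<^sup>+ z. f z \<partial>lborel)" .
qed simp

lemma distr_lborel_shear_Im:
  "distr lborel borel (\<lambda>z. z + \<i> * of_real (t * Re z)) = (lborel :: complex measure)"
proof (rule distr_lborel_eqI)
  fix f :: "complex \<Rightarrow> ennreal" assume [measurable]: "f \<in> borel_measurable borel"
  have "(\<integral>\<^sup>+ z. f (z + \<i> * of_real (t * Re z)) \<partial>lborel) =
        (\<integral>\<^sup>+ x. \<integral>\<^sup>+ y. f (Complex x (x * t + y)) \<partial>lborel \<partial>lborel)"
    by (subst nn_integral_lborel_complex(2))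
       (simp, intro nn_integral_cong arg_cong[where f = f], simp add: complex_eq_iff)
  also have "\<dots> = (\<integral>\<^sup>+ x. \<integral>\<^sup>+ y. f (Complex x y) \<partial>lborel \<partial>lborel)"
  proof (rule nn_integral_cong)
    fix x
    have "(\<lambda>y. f (Complex x y)) \<in> borel_measurable borel"
      unfolding Complex_eq by measurable
    then show "(\<integral>\<^sup>+ y. f (Complex x (x * t + y)) \<partial>lborel) = (\<integral>\<^sup>+ y. f (Complex x y) \<partial>lborel)"
      using nn_integral_real_affine[of "\<lambda>y. f (Complex x y)" 1 "x * t"] by simp
  qed
  also have "\<dots> = (\<integral>\<^sup>+ z. f z \<partial>lborel)"
    by (simp add: nn_integral_lborel_complex(2))
  finally show "(\<integral>\<^sup>+ z. f (z + \<i> * of_real (t * Re z)) \<partial>lborel) = (\<integral>\<^sup>+ z. f z \<partial>lborel)" .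
qed simp

text \<open>A rotation is a product of three shears:
  \<open>\<omega> = X \<circ> Y \<circ> X\<close> with \<open>X z = z + \<alpha> Im z\<close>, \<open>Y z = z + \<i> Im \<omega> Re z\<close>,
  \<open>\<alpha> = - Im \<omega> / (1 + Re \<omega>)\<close>, provided \<open>\<omega> \<noteq> -1\<close>.\<close>

lemma distr_lborel_rotation_aux:
  fixes \<omega> :: complex
  assumes "cmod \<omega> = 1" "\<omega> \<noteq> -1"
  shows "distr lborel borel (\<lambda>z. \<omega> * z) = lborel"
proof -
  define a b where "a = Re \<omega>" and "b = Im \<omega>"
  have ab: "a\<^sup>2 + b\<^sup>2 = 1"
    using assms(1) unfolding a_def b_def cmod_def by simp
  have "1 + a \<noteq> 0"
  proof
    assume "1 + a = 0"
    then have "a = -1" by simp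
    with ab have "b = 0" by simp
    with \<open>a = -1\<close> assms(2) show False unfolding a_def b_def by (simp add: complex_eq_iff)
  qed
  define \<alpha> where "\<alpha> = - b / (1 + a)"
  have "b * b = (1 - a) * (1 + a)"
    using ab by (simp add: power2_eq_square algebra_simps)
  then have "\<alpha> * b = a - 1" "\<alpha> * (1 + a) = - b"
    using \<open>1 + a \<noteq> 0\<close> unfolding \<alpha>_def by (simp_all add: field_simps)
  then have key: "1 + \<alpha> * b = a" "\<alpha> * (2 + \<alpha> * b) = - b"
    by (auto simp: algebra_simps)
  define X Y where "X = (\<lambda>z::complex. z + of_real (\<alpha> * Im z))"
    and "Y = (\<lambda>z::complex. z + \<i> * of_real (b * Re z))"
  have "X (Y (X z)) = Complex ((1 + \<alpha> * b) * Re z + (\<alpha> * (2 + \<alpha> * b)) * Im z)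
                              (b * Re z + (1 + \<alpha> * b) * Im z)" for z
    by (simp add: X_def Y_def complex_eq_iff algebra_simps)
  then have rot: "(\<lambda>z. \<omega> * z) = X \<circ> Y \<circ> X"
    unfolding key by (auto simp: complex_eq_iff a_def b_def)
  have [measurable]: "X \<in> borel_measurable borel" "Y \<in> borel_measurable borel"
    unfolding X_def Y_def by measurable
  have "distr lborel borel X = lborel" "distr lborel borel Y = lborel"
    unfolding X_def Y_def by (rule distr_lborel_shear_Re, rule distr_lborel_shear_Im)
  then have "distr (distr (distr lborel borel X) borel Y) borel X = lborel"
    by simp
  then show ?thesis
    unfolding rot by (simp add: distr_distr comp_def)
qed

lemma distr_lborel_rotation:
  fixes \<omega> :: complex
  assumes "cmod \<omega> = 1"
  shows "distr lborel borel (\<lambda>z. \<omega> * z) = lborel"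
proof (cases "\<omega> = -1")
  case True
  have "distr lborel borel (\<lambda>z. \<omega> * z) = distr (distr lborel borel (\<lambda>z. \<i> * z)) borel (\<lambda>z. \<i> * z)"
    by (simp add: distr_distr comp_def True)
  moreover have "distr lborel borel (\<lambda>z. \<i> * z) = lborel"
    by (rule distr_lborel_rotation_aux) (auto simp: complex_eq_iff)
  ultimately show ?thesis
    by simp
qed (use assms distr_lborel_rotation_aux in auto)

lemma integral_lborel_translate:
  fixes f :: "'a::euclidean_space \<Rightarrow> 'b::{banach, second_countable_topology}"
  assumes [measurable]: "f \<in> borel_measurable borel"
  shows "integral\<^sup>L lborel (\<lambda>z. f (c + z)) = integral\<^sup>L lborel f"
  by (subst lborel_distr_plus[symmetric, of c], subst integral_distr) simp_all

lemma integral_lborel_complex_rotate: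
  fixes f :: "complex \<Rightarrow> 'b::{banach, second_countable_topology}"
  assumes [measurable]: "f \<in> borel_measurable borel" and "cmod \<omega> = 1"
  shows "integral\<^sup>L lborel (\<lambda>z. f (\<omega> * z)) = integral\<^sup>L lborel f"
  by (subst distr_lborel_rotation[symmetric, OF \<open>cmod \<omega> = 1\<close>], subst integral_distr) simp_all

lemma integrable_indicator_ball:
  fixes f :: "'a::euclidean_space \<Rightarrow> 'b::{banach, second_countable_topology}"
  assumes "continuous_on (cball a s) f"
  shows "integrable lborel (\<lambda>z. indicator (ball a s) z *\<^sub>R f z)"
proof -
  have "set_integrable lborel (cball a s) f"
    unfolding set_integrable_def by (rule borel_integrable_compact) (simp_all add: assms)
  then show ?thesis
    unfolding set_integrable_def[symmetric] by (rule set_integrable_subset) auto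
qed

lemma emeasure_ball_complex: "s \<ge> 0 \<Longrightarrow> emeasure lborel (ball (a::complex) s) = ennreal (pi * s\<^sup>2)"
  using emeasure_ball[of s a] by (simp add: unit_ball_vol_2 mult.commute)

lemma measure_ball_complex: "s \<ge> 0 \<Longrightarrow> measure lborel (ball (a::complex) s) = pi * s\<^sup>2"
  using content_ball[of s a] by (simp add: unit_ball_vol_2)

lemma integral_indicator_ball_const:
  fixes c :: "'b::{banach, second_countable_topology}"
  assumes "s \<ge> 0"
  shows "integral\<^sup>L lborel (\<lambda>z. indicator (ball (a::complex) s) z *\<^sub>R c) = (pi * s\<^sup>2) *\<^sub>R c"
  using assms emeasure_ball_complex[OF assms, of a] measure_ball_complex[OF assms, of a]
  by (subst integral_scaleR_left) auto

lemma integral_ball_power_eq_0: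
  assumes "n \<ge> 1"
  shows "integral\<^sup>L lborel (\<lambda>z. indicator (ball a s) z *\<^sub>R (z - a) ^ n) = (0::complex)"
proof -
  define I where "I = integral\<^sup>L lborel (\<lambda>z. indicator (ball 0 s) z *\<^sub>R (z::complex) ^ n)"
  define \<omega> where "\<omega> = cis (pi / (n + 1))"
  have "sin (n * (pi / (n + 1))) > 0"
    using assms by (intro sin_gt_zero) (simp_all add: field_simps)
  moreover have "\<omega> ^ n = cis (n * (pi / (n + 1)))"
    unfolding \<omega>_def by (rule Complex.DeMoivre)
  ultimately have "\<omega> ^ n \<noteq> 1"
    by (auto simp: complex_eq_iff)
  have "I = integral\<^sup>L lborel (\<lambda>z. indicator (ball 0 s) (\<omega> * z) *\<^sub>R (\<omega> * z) ^ n)"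
    unfolding I_def
    by (rule integral_lborel_complex_rotate[symmetric])
       (simp_all add: \<omega>_def borel_measurable_continuous_on_indicator continuous_intros)
  also have "\<dots> = integral\<^sup>L lborel (\<lambda>z. \<omega> ^ n * (indicator (ball 0 s) z *\<^sub>R z ^ n))"
    by (intro Bochner_Integration.integral_cong)
       (simp_all add: indicator_def norm_mult \<omega>_def power_mult_distrib)
  also have "\<dots> = \<omega> ^ n * I"
    unfolding I_def by (rule integral_mult_right_zero)
  finally have "I = 0"
    using \<open>\<omega> ^ n \<noteq> 1\<close> by (metis mult_cancel_right2)
  moreover have "integral\<^sup>L lborel (\<lambda>z. indicator (ball a s) (a + z) *\<^sub>R (a + z - a) ^ n) =
      integral\<^sup>L lborel (\<lambda>z. indicator (ball a s) z *\<^sub>R (z - a) ^ n)"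
    by (rule integral_lborel_translate)
       (simp add: borel_measurable_continuous_on_indicator continuous_intros)
  moreover have "integral\<^sup>L lborel (\<lambda>z. indicator (ball a s) (a + z) *\<^sub>R (a + z - a) ^ n) = I"
    unfolding I_def by (intro Bochner_Integration.integral_cong) (simp_all add: indicator_def dist_norm)
  ultimately show ?thesis
    by simp
qed

lemma integral_ball_polynomial:
  fixes c :: "nat \<Rightarrow> complex"
  assumes "N \<ge> 1" "s \<ge> 0"
  shows "integral\<^sup>L lborel (\<lambda>z. indicator (ball a s) z *\<^sub>R (\<Sum>n<N. c n * (z - a) ^ n)) =
         of_real (pi * s\<^sup>2) * c 0"
proof -
  have eq: "(\<lambda>z. indicator (ball a s) z *\<^sub>R (\<Sum>n<N. c n * (z - a) ^ n)) =
        (\<lambda>z. \<Sum>n<N. c n * (indicator (ball a s) z *\<^sub>R (z - a) ^ n))"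
    by (simp add: scaleR_sum_right mult_scaleR_right)
  have "integral\<^sup>L lborel (\<lambda>z. indicator (ball a s) z *\<^sub>R (\<Sum>n<N. c n * (z - a) ^ n)) =
        (\<Sum>n<N. integral\<^sup>L lborel (\<lambda>z. c n * (indicator (ball a s) z *\<^sub>R (z - a) ^ n)))"
    unfolding eq
    by (rule Bochner_Integration.integral_sum)
       (intro integrable_mult_right integrable_indicator_ball continuous_intros)
  also have "\<dots> = (\<Sum>n<N. c n * integral\<^sup>L lborel (\<lambda>z. indicator (ball a s) z *\<^sub>R (z - a) ^ n))"
    by (intro sum.cong refl integral_mult_right_zero)
  also have "\<dots> = (\<Sum>n\<in>{0}. c n * integral\<^sup>L lborel (\<lambda>z. indicator (ball a s) z *\<^sub>R (z - a) ^ n))"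
    using assms(1) by (intro sum.mono_neutral_right) (auto simp: integral_ball_power_eq_0)
  finally show ?thesis
    using integral_indicator_ball_const[OF assms(2), of a "1::complex"] by (simp add: scaleR_conv_of_real)
qed

lemma holomorphic_mean_value_ball:
  assumes hol: "k holomorphic_on ball a R" and s: "0 \<le> s" "s < R"
  shows "integral\<^sup>L lborel (\<lambda>z. indicator (ball a s) z *\<^sub>R k z) = of_real (pi * s\<^sup>2) * k a"
proof -
  define c where "c n = (deriv ^^ n) k a / fact n" for n
  have sums: "(\<lambda>n. c n * (w - a) ^ n) sums k w" if "w \<in> ball a R" for w
    unfolding c_def using holomorphic_power_series[OF hol that] by simp
  define s' where "s' = (s + R) / 2"
  have "s < s'" "s' < R"
    using s unfolding s'_def by auto
  then have "summable (\<lambda>n. c n * (of_real s') ^ n)"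
    using sums[of "a + of_real s'"] s by (auto simp: dist_norm sums_iff)
  then have "summable (\<lambda>n. norm (c n * (of_real s :: complex) ^ n))"
    by (rule powser_insidea) (use s \<open>s < s'\<close> in auto)
  then have summ: "summable (\<lambda>n. norm (c n) * s ^ n)"
    using s by (simp add: norm_mult norm_power)
  define M where "M = (\<Sum>n. norm (c n) * s ^ n)"
  define P where "P N z = indicator (ball a s) z *\<^sub>R (\<Sum>n<N. c n * (z - a) ^ n)" for N z
  have "(\<lambda>N. integral\<^sup>L lborel (P N)) \<longlonglongrightarrow> integral\<^sup>L lborel (\<lambda>z. indicator (ball a s) z *\<^sub>R k z)"
  proof (rule integral_dominated_convergence[where w = "\<lambda>z. indicator (ball a s) z * M"])
    have "continuous_on (cball a s) k"
      using holomorphic_on_imp_continuous_on[OF hol] by (rule continuous_on_subset) (use s in auto)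
    then show "(\<lambda>z. indicator (ball a s) z *\<^sub>R k z) \<in> borel_measurable lborel"
      by (intro borel_measurable_integrable integrable_indicator_ball)
    show "P N \<in> borel_measurable lborel" for N
      unfolding P_def by (intro borel_measurable_integrable integrable_indicator_ball continuous_intros)
    show "integrable lborel (\<lambda>z. indicator (ball a s) z * M)"
      using integrable_indicator_ball[of a s "\<lambda>_. M"] by simp
    show "AE z in lborel. (\<lambda>N. P N z) \<longlonglongrightarrow> indicator (ball a s) z *\<^sub>R k z"
      using sums s unfolding P_def sums_def by (intro AE_I2) (auto simp: indicator_def)
    show "AE z in lborel. norm (P N z) \<le> indicator (ball a s) z * M" for N
    proof (rule AE_I2)
      fix z
      have "norm (\<Sum>n<N. c n * (z - a) ^ n) \<le> M" if "z \<in> ball a s"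
      proof -
        have "norm (z - a) \<le> s"
          using that by (simp add: dist_norm norm_minus_commute)
        then have "norm (\<Sum>n<N. c n * (z - a) ^ n) \<le> (\<Sum>n<N. norm (c n) * s ^ n)"
          by (intro order.trans[OF norm_sum sum_mono])
             (simp add: norm_mult norm_power mult_left_mono power_mono)
        also have "\<dots> \<le> M"
          unfolding M_def by (rule sum_le_suminf) (use summ s in auto)
        finally show ?thesis .
      qed
      then show "norm (P N z) \<le> indicator (ball a s) z * M"
        by (simp add: P_def indicator_def)
    qed
  qed
  moreover have "integral\<^sup>L lborel (P N) = of_real (pi * s\<^sup>2) * k a" if "N \<ge> 1" for N
    using integral_ball_polynomial[OF that s(1), of a c] unfolding P_def by (simp add: c_def)
  then have "(\<lambda>N. integral\<^sup>L lborel (P N)) \<longlonglongrightarrow> of_real (pi * s\<^sup>2) * k a"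
    by (intro tendsto_eventually eventually_sequentiallyI[of 1])
  ultimately show ?thesis
    using LIMSEQ_unique by blast
qed

lemma integral_ball_norm_sq_holomorphic:
  assumes hol: "k holomorphic_on ball a R" and s: "0 \<le> s" "s < R"
  shows "integral\<^sup>L lborel (\<lambda>z. indicator (ball a s) z * (cmod (k z))\<^sup>2) =
         pi * s\<^sup>2 * (cmod (k a))\<^sup>2 + integral\<^sup>L lborel (\<lambda>z. indicator (ball a s) z * (cmod (k z - k a))\<^sup>2)"
proof -
  have contk: "continuous_on (cball a s) k"
    using holomorphic_on_imp_continuous_on[OF hol] by (rule continuous_on_subset) (use s in auto)
  define D where "D z = indicator (ball a s) z *\<^sub>R (k z - k a)" for z
  have intD: "integrable lborel D"
    unfolding D_def by (intro integrable_indicator_ball continuous_intros contk)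
  have "integral\<^sup>L lborel D =
        integral\<^sup>L lborel (\<lambda>z. indicator (ball a s) z *\<^sub>R k z) -
        integral\<^sup>L lborel (\<lambda>z. indicator (ball a s) z *\<^sub>R k a)"
    unfolding D_def
    by (subst Bochner_Integration.integral_diff[symmetric])
       (auto intro!: integrable_indicator_ball continuous_intros contk Bochner_Integration.integral_cong
             simp: algebra_simps)
  also have "\<dots> = 0"
    unfolding holomorphic_mean_value_ball[OF hol s] integral_indicator_ball_const[OF s(1)]
    by (simp add: scaleR_conv_of_real)
  finally have D0: "integral\<^sup>L lborel D = 0" .
  have "bounded_linear (\<lambda>w. Re (cnj (k a) * w))"
    by (intro bounded_linear_compose[OF bounded_linear_Re] bounded_linear_mult_right)
  from integral_bounded_linear[OF this intD]
  have cross: "integral\<^sup>L lborel (\<lambda>z. Re (cnj (k a) * D z)) = 0"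
    unfolding D0 by simp
  define A B C where "A = (\<lambda>z. indicator (ball a s) z * (cmod (k a))\<^sup>2)"
    and "B = (\<lambda>z. Re (cnj (k a) * D z))"
    and "C = (\<lambda>z. indicator (ball a s) z * (cmod (k z - k a))\<^sup>2)"
  have split: "indicator (ball a s) z * (cmod (k z))\<^sup>2 = A z + 2 * B z + C z" for z
  proof -
    have "(cmod (k a + (k z - k a)))\<^sup>2 =
          (cmod (k a))\<^sup>2 + 2 * Re (cnj (k a) * (k z - k a)) + (cmod (k z - k a))\<^sup>2"
      unfolding cmod_power2 by (simp add: power2_eq_square algebra_simps)
    then show ?thesis
      by (simp add: A_def B_def C_def D_def indicator_def)
  qed
  have "integrable lborel A"
    using integrable_indicator_ball[of a s "\<lambda>_. (cmod (k a))\<^sup>2"] unfolding A_def by simp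
  moreover have "integrable lborel B"
    using intD unfolding B_def by (intro integrable_Re integrable_mult_right)
  moreover have "integrable lborel C"
    using integrable_indicator_ball[of a s "\<lambda>z. (cmod (k z - k a))\<^sup>2"] contk
    unfolding C_def by (simp add: continuous_intros)
  ultimately have "integral\<^sup>L lborel (\<lambda>z. A z + 2 * B z + C z) =
      integral\<^sup>L lborel A + 2 * integral\<^sup>L lborel B + integral\<^sup>L lborel C"
    by simp
  moreover have "integral\<^sup>L lborel A = pi * s\<^sup>2 * (cmod (k a))\<^sup>2"
    using integral_indicator_ball_const[OF s(1), of a "(cmod (k a))\<^sup>2"] by (simp add: A_def)
  ultimately show ?thesis
    unfolding split using cross by (simp add: B_def C_def)
qed

lemma linear_complex_to_real:
  fixes T :: "complex \<Rightarrow> real"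
  assumes "linear T"
  shows "T h = Re h * T 1 + Im h * T \<i>"
proof -
  have "h = Re h *\<^sub>R 1 + Im h *\<^sub>R \<i>"
    by (simp add: complex_eq_iff)
  then have "T h = T (Re h *\<^sub>R 1 + Im h *\<^sub>R \<i>)"
    by simp
  then show ?thesis
    using assms by (simp add: linear_add linear_scale)
qed

lemma has_real_derivative_along_line:
  fixes \<phi> :: "'a::real_normed_vector \<Rightarrow> real"
  assumes "\<phi> differentiable (at (b + x *\<^sub>R v))"
  shows "((\<lambda>t. \<phi> (b + t *\<^sub>R v)) has_real_derivative
           frechet_derivative \<phi> (at (b + x *\<^sub>R v)) v) (at x)"
proof -
  let ?D = "frechet_derivative \<phi> (at (b + x *\<^sub>R v))"
  have "((\<lambda>t. b + t *\<^sub>R v) has_derivative (\<lambda>t. t *\<^sub>R v)) (at x)"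
    by (auto intro!: derivative_eq_intros)
  from has_derivative_compose[OF this assms[unfolded frechet_derivative_works]]
  have "((\<lambda>t. \<phi> (b + t *\<^sub>R v)) has_derivative (\<lambda>t. ?D (t *\<^sub>R v))) (at x)" .
  moreover have "?D (t *\<^sub>R v) = ?D v * t" for t
    using linear_frechet_derivative[OF assms] by (simp add: linear_scale)
  ultimately show ?thesis
    by (simp add: has_field_derivative_def)
qed

lemma frechet_derivative_approx:
  assumes "f differentiable (at w)" "e > 0"
  obtains d where "d > 0"
    "\<And>q. norm q < d \<Longrightarrow> norm (f (w + q) - f w - frechet_derivative f (at w) q) \<le> e * norm q"
proof -
  from assms(1)[unfolded frechet_derivative_works has_derivative_at_alt] assms(2)
  obtain d where "d > 0" and d: "\<forall>y. norm (y - w) < d \<longrightarrow>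
      norm (f y - f w - frechet_derivative f (at w) (y - w)) \<le> e * norm (y - w)"
    by blast
  show ?thesis
    using d[rule_format, of "w + _"] by (intro that[OF \<open>d > 0\<close>]) simp
qed

text \<open>The mean value theorem in direction \<open>u\<close> turns the second difference into a
  difference of the \<open>u\<close>-partial derivative at two points near \<open>w\<close>.\<close>

lemma second_difference_approx:
  fixes \<phi> :: "'a::real_normed_vector \<Rightarrow> real" and u v w :: 'a
  defines "B \<equiv> frechet_derivative (\<lambda>x. frechet_derivative \<phi> (at x) u) (at w)"
  assumes \<Omega>: "open \<Omega>" "w \<in> \<Omega>" and d\<phi>: "\<phi> differentiable_on \<Omega>"
    and du: "(\<lambda>x. frechet_derivative \<phi> (at x) u) differentiable (at w)" and e: "e > 0"
  obtains d where "d > 0" "\<And>t. 0 < t \<Longrightarrow> t < d \<Longrightarrow>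
    \<bar>\<phi> (w + t *\<^sub>R u + t *\<^sub>R v) - \<phi> (w + t *\<^sub>R u) - \<phi> (w + t *\<^sub>R v) + \<phi> w - t\<^sup>2 * B v\<bar>
      \<le> e * t\<^sup>2 * (2 * norm u + norm v)"
proof -
  define p where "p x = frechet_derivative \<phi> (at x) u" for x
  obtain d1 where d1: "d1 > 0" "\<And>q. norm q < d1 \<Longrightarrow> \<bar>p (w + q) - p w - B q\<bar> \<le> e * norm q"
    using frechet_derivative_approx[OF du e] unfolding p_def B_def by auto
  obtain d2 where d2: "d2 > 0" "ball w d2 \<subseteq> \<Omega>"
    using \<Omega> openE by blast
  define K where "K = norm u + norm v + 1"
  have K: "K > 0"
    unfolding K_def by (simp add: add_nonneg_pos)
  define d where "d = min d1 d2 / K"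
  have "d > 0"
    unfolding d_def using d1 d2 K by simp
  moreover have "\<bar>\<phi> (w + t *\<^sub>R u + t *\<^sub>R v) - \<phi> (w + t *\<^sub>R u) - \<phi> (w + t *\<^sub>R v) + \<phi> w - t\<^sup>2 * B v\<bar>
      \<le> e * t\<^sup>2 * (2 * norm u + norm v)" if t: "0 < t" "t < d" for t
  proof -
    have small: "norm (y *\<^sub>R v + x *\<^sub>R u) < min d1 d2" if "0 \<le> x" "x \<le> t" "0 \<le> y" "y \<le> t" for x y
    proof -
      have "norm (y *\<^sub>R v + x *\<^sub>R u) \<le> y * norm v + x * norm u"
        using that norm_triangle_ineq[of "y *\<^sub>R v" "x *\<^sub>R u"] by simp
      also have "\<dots> \<le> t * K"
        using that t(1) mult_right_mono[of y t "norm v"] mult_right_mono[of x t "norm u"]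
        unfolding K_def distrib_left by simp
      also have "\<dots> < d * K"
        using t K by simp
      finally show ?thesis
        unfolding d_def using K by simp
    qed
    have dif: "\<phi> differentiable (at (w + q))" if "norm q < d2" for q
    proof -
      have "w + q \<in> \<Omega>"
        using d2 that by (auto simp: dist_norm)
      then show ?thesis
        using d\<phi> \<Omega>(1) by (metis at_within_open differentiable_on_def)
    qed
    define G where "G x = \<phi> (w + t *\<^sub>R v + x *\<^sub>R u) - \<phi> (w + x *\<^sub>R u)" for x
    have G': "(G has_real_derivative (p (w + t *\<^sub>R v + x *\<^sub>R u) - p (w + x *\<^sub>R u))) (at x)"
      if "0 \<le> x" "x \<le> t" for x
    proof -
      have "norm (t *\<^sub>R v + x *\<^sub>R u) < d2" "norm (x *\<^sub>R u) < d2"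
        using small[of x t] small[of x 0] that t by auto
      then show ?thesis
        unfolding G_def p_def
        by (intro DERIV_diff has_real_derivative_along_line) (simp_all add: dif add.assoc)
    qed
    obtain \<xi> where \<xi>: "0 < \<xi>" "\<xi> < t"
      and G: "G t - G 0 = t * (p (w + (t *\<^sub>R v + \<xi> *\<^sub>R u)) - p (w + \<xi> *\<^sub>R u))"
      using MVT2[OF t(1), of G, OF G'] by (auto simp: add.assoc)
    define q1 q2 where "q1 = t *\<^sub>R v + \<xi> *\<^sub>R u" and "q2 = \<xi> *\<^sub>R u"
    have Gq: "G t - G 0 = t * (p (w + q1) - p (w + q2))"
      using G unfolding q1_def q2_def .
    have "norm q1 < d1" "norm q2 < d1" "norm q1 \<le> t * norm v + t * norm u" "norm q2 \<le> t * norm u"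
      using small[of \<xi> t] small[of \<xi> 0] \<xi> norm_triangle_ineq[of "t *\<^sub>R v" "\<xi> *\<^sub>R u"]
        mult_right_mono[of \<xi> t "norm u"]
      unfolding q1_def q2_def by auto
    then have E: "\<bar>p (w + q1) - p w - B q1\<bar> + \<bar>p (w + q2) - p w - B q2\<bar>
        \<le> e * (t * norm v + t * norm u) + e * (t * norm u)"
      using e by (intro add_mono order_trans[OF d1(2)] mult_left_mono) auto
    have "B q1 - B q2 = t * B v"
      using linear_frechet_derivative[OF du] unfolding q1_def q2_def B_def
      by (simp add: linear_add linear_scale)
    moreover have "G t - G 0 = \<phi> (w + t *\<^sub>R u + t *\<^sub>R v) - \<phi> (w + t *\<^sub>R u) - \<phi> (w + t *\<^sub>R v) + \<phi> w"
      unfolding G_def by (simp add: algebra_simps)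
    ultimately have "\<phi> (w + t *\<^sub>R u + t *\<^sub>R v) - \<phi> (w + t *\<^sub>R u) - \<phi> (w + t *\<^sub>R v) + \<phi> w - t\<^sup>2 * B v
        = t * ((p (w + q1) - p w - B q1) - (p (w + q2) - p w - B q2))"
      using Gq by (simp add: power2_eq_square algebra_simps)
    also have "\<bar>\<dots>\<bar> \<le> t * (\<bar>p (w + q1) - p w - B q1\<bar> + \<bar>p (w + q2) - p w - B q2\<bar>)"
      using t by (simp add: abs_mult abs_triangle_ineq4)
    also have "\<dots> \<le> t * (e * (t * norm v + t * norm u) + e * (t * norm u))"
      using E t by (intro mult_left_mono) auto
    finally show ?thesis
      by (simp add: power2_eq_square algebra_simps)
  qed
  ultimately show ?thesis
    using that by blast
qed

lemma frechet_derivative_partials_commute: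
  fixes \<phi> :: "'a::real_normed_vector \<Rightarrow> real" and u v w :: 'a
  assumes "open \<Omega>" "w \<in> \<Omega>" "\<phi> differentiable_on \<Omega>"
    and "(\<lambda>x. frechet_derivative \<phi> (at x) u) differentiable (at w)"
    and "(\<lambda>x. frechet_derivative \<phi> (at x) v) differentiable (at w)"
  shows "frechet_derivative (\<lambda>x. frechet_derivative \<phi> (at x) u) (at w) v =
         frechet_derivative (\<lambda>x. frechet_derivative \<phi> (at x) v) (at w) u"
    (is "?Buv = ?Bvu")
proof (rule ccontr)
  assume "?Buv \<noteq> ?Bvu"
  define K where "K = 3 * (norm u + norm v) + 1"
  have K: "K > 0"
    unfolding K_def by (simp add: add_nonneg_pos)
  define e where "e = \<bar>?Buv - ?Bvu\<bar> / (2 * K)"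
  have e: "e > 0"
    using \<open>?Buv \<noteq> ?Bvu\<close> K unfolding e_def by simp
  obtain d1 where d1: "d1 > 0" "\<And>t. 0 < t \<Longrightarrow> t < d1 \<Longrightarrow>
      \<bar>\<phi> (w + t *\<^sub>R u + t *\<^sub>R v) - \<phi> (w + t *\<^sub>R u) - \<phi> (w + t *\<^sub>R v) + \<phi> w - t\<^sup>2 * ?Buv\<bar>
        \<le> e * t\<^sup>2 * (2 * norm u + norm v)"
    using second_difference_approx[OF assms(1-4) e] by blast
  obtain d2 where d2: "d2 > 0" "\<And>t. 0 < t \<Longrightarrow> t < d2 \<Longrightarrow>
      \<bar>\<phi> (w + t *\<^sub>R v + t *\<^sub>R u) - \<phi> (w + t *\<^sub>R v) - \<phi> (w + t *\<^sub>R u) + \<phi> w - t\<^sup>2 * ?Bvu\<bar>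
        \<le> e * t\<^sup>2 * (2 * norm v + norm u)"
    using second_difference_approx[OF assms(1-3,5) e] by blast
  define t where "t = min d1 d2 / 2"
  have t: "0 < t" "t < d1" "t < d2"
    using d1 d2 unfolding t_def by auto
  have "t\<^sup>2 * \<bar>?Buv - ?Bvu\<bar> = \<bar>t\<^sup>2 * ?Buv - t\<^sup>2 * ?Bvu\<bar>"
    by (simp add: abs_mult flip: right_diff_distrib)
  also have "\<dots> \<le> e * t\<^sup>2 * (2 * norm u + norm v) + e * t\<^sup>2 * (2 * norm v + norm u)"
    using d1(2)[OF t(1,2)] d2(2)[OF t(1,3)] by (simp add: add_ac abs_le_iff)
  also have "\<dots> = t\<^sup>2 * (e * (K - 1))"
    unfolding K_def by (simp add: algebra_simps)
  also have "\<dots> < t\<^sup>2 * (e * K)"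
    using t e by simp
  finally have "\<bar>?Buv - ?Bvu\<bar> < e * K"
    using t by simp
  then show False
    using K unfolding e_def by simp
qed

lemma smooth_on_differentiable:
  assumes "smooth_on S \<phi>"
  shows "\<phi> differentiable_on S" and "(\<lambda>x. frechet_derivative \<phi> (at x) v) differentiable_on S"
  using assms[unfolded smooth_on_def, rule_format, of 2] by (simp_all add: numeral_2_eq_2)

text \<open>Cauchy--Riemann: for harmonic \<open>\<phi>\<close>, the equations for \<open>\<partial>\<phi>/\<partial>x - \<i> \<partial>\<phi>/\<partial>y\<close> are
  the Laplace equation and the symmetry of the mixed partials.\<close>

lemma holomorphic_on_complex_gradient:
  fixes \<phi> :: "complex \<Rightarrow> real"
  assumes \<Omega>: "open \<Omega>" and d\<phi>: "\<phi> differentiable_on \<Omega>"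
    and dp: "\<And>v. (\<lambda>x. frechet_derivative \<phi> (at x) v) differentiable_on \<Omega>"
    and harm: "harmonic_on \<Omega> \<phi>"
  shows "(\<lambda>z. of_real (frechet_derivative \<phi> (at z) 1) - \<i> * of_real (frechet_derivative \<phi> (at z) \<i>))
           holomorphic_on \<Omega>"
  unfolding holomorphic_on_open[OF \<Omega>]
proof (intro ballI exI)
  fix w assume w: "w \<in> \<Omega>"
  define \<phi>\<^sub>x \<phi>\<^sub>y where "\<phi>\<^sub>x = (\<lambda>x. frechet_derivative \<phi> (at x) 1)"
    and "\<phi>\<^sub>y = (\<lambda>x. frechet_derivative \<phi> (at x) \<i>)"
  define B1 Bi where "B1 = frechet_derivative \<phi>\<^sub>x (at w)" and "Bi = frechet_derivative \<phi>\<^sub>y (at w)"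
  have d1: "\<phi>\<^sub>x differentiable (at w)" and di: "\<phi>\<^sub>y differentiable (at w)"
    unfolding \<phi>\<^sub>x_def \<phi>\<^sub>y_def using dp w differentiable_on_eq_differentiable_at[OF \<Omega>] by auto
  have sym: "B1 \<i> = Bi 1"
    using d1 di unfolding B1_def Bi_def \<phi>\<^sub>x_def \<phi>\<^sub>y_def
    by (rule frechet_derivative_partials_commute[OF \<Omega> w d\<phi>])
  have lap: "Bi \<i> = - B1 1"
    using harm w unfolding harmonic_on_def laplacian_def B1_def Bi_def \<phi>\<^sub>x_def \<phi>\<^sub>y_def by auto
  have "((\<lambda>z. of_real (\<phi>\<^sub>x z) - \<i> * of_real (\<phi>\<^sub>y z)) has_derivative
         (\<lambda>v. of_real (B1 v) - \<i> * of_real (Bi v))) (at w)"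
    unfolding B1_def Bi_def
    by (intro derivative_intros bounded_linear.has_derivative[OF bounded_linear_of_real]
        d1[unfolded frechet_derivative_works] di[unfolded frechet_derivative_works])
  moreover have "(\<lambda>v. of_real (B1 v) - \<i> * of_real (Bi v)) = (*) (of_real (B1 1) - \<i> * of_real (Bi 1))"
  proof
    fix v
    show "of_real (B1 v) - \<i> * of_real (Bi v) = (of_real (B1 1) - \<i> * of_real (Bi 1)) * v"
      using linear_complex_to_real[OF linear_frechet_derivative[OF d1], of v]
        linear_complex_to_real[OF linear_frechet_derivative[OF di], of v] sym lap
      unfolding B1_def[symmetric] Bi_def[symmetric] by (simp add: complex_eq_iff algebra_simps)
  qed
  ultimately have "((\<lambda>z. of_real (\<phi>\<^sub>x z) - \<i> * of_real (\<phi>\<^sub>y z)) has_field_derivative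
      (of_real (B1 1) - \<i> * of_real (Bi 1))) (at w)"
    unfolding has_field_derivative_def by simp
  then show "((\<lambda>z. of_real (frechet_derivative \<phi> (at z) 1) - \<i> * of_real (frechet_derivative \<phi> (at z) \<i>))
      has_field_derivative (of_real (B1 1) - \<i> * of_real (Bi 1))) (at w)"
    unfolding \<phi>\<^sub>x_def \<phi>\<^sub>y_def .
qed

lemma harmonic_on_ball_eq_Re_holomorphic:
  fixes \<phi> :: "complex \<Rightarrow> real"
  assumes \<Omega>: "open \<Omega>" "ball a R \<subseteq> \<Omega>" and d\<phi>: "\<phi> differentiable_on \<Omega>"
    and dp: "\<And>v. (\<lambda>x. frechet_derivative \<phi> (at x) v) differentiable_on \<Omega>"
    and harm: "harmonic_on \<Omega> \<phi>"
  obtains h where "h holomorphic_on ball a R" "\<And>z. z \<in> ball a R \<Longrightarrow> Re (h z) = \<phi> z"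
proof -
  define g where "g z = of_real (frechet_derivative \<phi> (at z) 1) - \<i> * of_real (frechet_derivative \<phi> (at z) \<i>)" for z
  have "g holomorphic_on ball a R"
    unfolding g_def using holomorphic_on_complex_gradient[OF \<Omega>(1) d\<phi> dp harm] \<Omega>(2)
    by (rule holomorphic_on_subset)
  then obtain h0 where h0: "\<And>x. x \<in> ball a R \<Longrightarrow> (h0 has_field_derivative g x) (at x within ball a R)"
    using holomorphic_convex_primitive'[OF convex_ball open_ball] by blast
  have h: "(h0 has_field_derivative g x) (at x)" if "x \<in> ball a R" for x
    using h0[OF that] at_within_open[OF that open_ball] by simp
  have "((\<lambda>z. Re (h0 z) - \<phi> z) has_derivative (\<lambda>v. 0)) (at x within ball a R)" if x: "x \<in> ball a R" for x
  proof -
    have dx: "\<phi> differentiable (at x)"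
      using d\<phi> \<Omega>(2) x differentiable_on_eq_differentiable_at[OF \<Omega>(1)] by blast
    have "((\<lambda>z. Re (h0 z) - \<phi> z) has_derivative
           (\<lambda>v. Re (g x * v) - frechet_derivative \<phi> (at x) v)) (at x)"
      using h[OF x] dx unfolding has_field_derivative_def frechet_derivative_works
      by (intro derivative_intros) auto
    moreover have "Re (g x * v) = frechet_derivative \<phi> (at x) v" for v
      using linear_complex_to_real[OF linear_frechet_derivative[OF dx], of v]
      unfolding g_def by (simp add: algebra_simps)
    ultimately show ?thesis
      by (simp add: has_derivative_at_withinI)
  qed
  then have "\<exists>c. \<forall>x\<in>ball a R. Re (h0 x) - \<phi> x = c"
    by (rule has_derivative_zero_constant[OF convex_ball])
  then obtain c where c: "\<And>x. x \<in> ball a R \<Longrightarrow> Re (h0 x) - \<phi> x = c"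
    by blast
  have "h0 holomorphic_on ball a R"
    unfolding holomorphic_on_open[OF open_ball] using h by blast
  then show ?thesis
    using c by (intro that[of "\<lambda>z. h0 z - of_real c"] holomorphic_intros) (simp_all add: algebra_simps)
qed

lemma second_order_taylor_estimate:
  fixes \<phi> :: "complex \<Rightarrow> real"
  defines "\<phi>\<^sub>x \<equiv> \<lambda>x. frechet_derivative \<phi> (at x) 1"
    and "\<phi>\<^sub>y \<equiv> \<lambda>x. frechet_derivative \<phi> (at x) \<i>"
  assumes \<Omega>: "open \<Omega>" "a \<in> \<Omega>" and d\<phi>: "\<phi> differentiable_on \<Omega>"
    and d1: "\<phi>\<^sub>x differentiable (at a)" and di: "\<phi>\<^sub>y differentiable (at a)"
    and e: "e > 0"
  obtains d where "d > 0" "ball a d \<subseteq> \<Omega>"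
    "\<And>h. cmod h < d \<Longrightarrow>
      \<bar>\<phi> (a + h) - \<phi> a - (Re h * \<phi>\<^sub>x a + Im h * \<phi>\<^sub>y a)
        - (Re h * frechet_derivative \<phi>\<^sub>x (at a) h + Im h * frechet_derivative \<phi>\<^sub>y (at a) h) / 2\<bar>
      \<le> e * (cmod h)\<^sup>2"
proof -
  define A1 Ai where "A1 = frechet_derivative \<phi>\<^sub>x (at a)" and "Ai = frechet_derivative \<phi>\<^sub>y (at a)"
  have l1: "linear A1" and li: "linear Ai"
    unfolding A1_def Ai_def using d1 di by (simp_all add: linear_frechet_derivative)
  obtain d1' where d1': "d1' > 0" "\<And>q. cmod q < d1' \<Longrightarrow> \<bar>\<phi>\<^sub>x (a + q) - \<phi>\<^sub>x a - A1 q\<bar> \<le> e / 2 * cmod q"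
    using frechet_derivative_approx[OF d1, of "e / 2"] e unfolding A1_def by auto
  obtain di' where di': "di' > 0" "\<And>q. cmod q < di' \<Longrightarrow> \<bar>\<phi>\<^sub>y (a + q) - \<phi>\<^sub>y a - Ai q\<bar> \<le> e / 2 * cmod q"
    using frechet_derivative_approx[OF di, of "e / 2"] e unfolding Ai_def by auto
  obtain d3 where d3: "d3 > 0" "ball a d3 \<subseteq> \<Omega>"
    using \<Omega> openE by blast
  define d where "d = min (min d1' di') d3"
  have d: "d > 0" "d \<le> d1'" "d \<le> di'" "ball a d \<subseteq> \<Omega>"
    using d1' di' d3 unfolding d_def by auto
  moreover have "\<bar>\<phi> (a + h) - \<phi> a - (Re h * \<phi>\<^sub>x a + Im h * \<phi>\<^sub>y a) - (Re h * A1 h + Im h * Ai h) / 2\<bar>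
      \<le> e * (cmod h)\<^sup>2" if h: "cmod h < d" for h
  proof -
    define L Q where "L = Re h * \<phi>\<^sub>x a + Im h * \<phi>\<^sub>y a" and "Q = Re h * A1 h + Im h * Ai h"
    define k where "k t = \<phi> (a + t *\<^sub>R h) - t * L - t\<^sup>2 / 2 * Q" for t
    have inb: "a + t *\<^sub>R h \<in> ball a d" if "0 \<le> t" "t \<le> 1" for t
      using that h mult_left_le_one_le[of "cmod h" t] by (simp add: dist_norm)
    have "(k has_real_derivative (frechet_derivative \<phi> (at (a + t *\<^sub>R h)) h - L - t * Q)) (at t)"
      if "0 \<le> t" "t \<le> 1" for t
    proof -
      have "\<phi> differentiable (at (a + t *\<^sub>R h))"
        using d\<phi> inb[OF that] d(4) differentiable_on_eq_differentiable_at[OF \<Omega>(1)] by blast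
      then show ?thesis
        unfolding k_def
        by (intro DERIV_diff has_real_derivative_along_line)
           (auto intro!: derivative_eq_intros simp: power2_eq_square)
    qed
    from MVT2[of 0 1 k, OF _ this] obtain \<xi> where \<xi>: "0 < \<xi>" "\<xi> < 1"
      and k: "k 1 - k 0 = frechet_derivative \<phi> (at (a + \<xi> *\<^sub>R h)) h - L - \<xi> * Q"
      by auto
    define q where "q = \<xi> *\<^sub>R h"
    have nq: "cmod q \<le> cmod h"
      using \<xi> unfolding q_def by (simp add: mult_left_le_one_le)
    have "a + q \<in> \<Omega>"
      using inb[of \<xi>] d(4) \<xi> unfolding q_def by auto
    then have dq: "\<phi> differentiable (at (a + q))"
      using d\<phi> differentiable_on_eq_differentiable_at[OF \<Omega>(1)] by blast
    have "frechet_derivative \<phi> (at (a + q)) h - L - \<xi> * Q =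
        Re h * (\<phi>\<^sub>x (a + q) - \<phi>\<^sub>x a - A1 q) + Im h * (\<phi>\<^sub>y (a + q) - \<phi>\<^sub>y a - Ai q)"
      using linear_complex_to_real[OF linear_frechet_derivative[OF dq], of h] l1 li
      unfolding L_def Q_def q_def \<phi>\<^sub>x_def \<phi>\<^sub>y_def by (simp add: linear_scale algebra_simps)
    then have "\<bar>k 1 - k 0\<bar>
        \<le> \<bar>Re h\<bar> * \<bar>\<phi>\<^sub>x (a + q) - \<phi>\<^sub>x a - A1 q\<bar> + \<bar>Im h\<bar> * \<bar>\<phi>\<^sub>y (a + q) - \<phi>\<^sub>y a - Ai q\<bar>"
      using k unfolding q_def by (metis abs_mult abs_triangle_ineq)
    also have "\<dots> \<le> cmod h * (e / 2 * cmod h) + cmod h * (e / 2 * cmod h)"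
      using d1'(2)[of q] di'(2)[of q] nq h d e
      by (intro add_mono mult_mono) (auto simp: abs_Re_le_cmod abs_Im_le_cmod intro: order_trans mult_left_mono)
    also have "\<dots> = e * (cmod h)\<^sup>2"
      by (simp add: power2_eq_square algebra_simps)
    finally have "\<bar>k 1 - k 0\<bar> \<le> e * (cmod h)\<^sup>2" .
    moreover have "k 1 - k 0 = \<phi> (a + h) - \<phi> a - L - Q / 2"
      by (simp add: k_def)
    ultimately show ?thesis
      unfolding L_def Q_def by simp
  qed
  ultimately show ?thesis
    using that unfolding A1_def Ai_def by blast
qed

lemma Re_quadratic_exponent:
  fixes p q P Q R T c :: real and h :: complex
  assumes "c = (P + T) / 4"
  shows "2 * Re ((of_real p - \<i> * of_real q) / 2 * h +
           (of_real ((P - T) / 4) - \<i> * of_real ((Q + R) / 4)) * h\<^sup>2 / 2) =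
         (Re h * p + Im h * q) + (Re h * (Re h * P + Im h * Q) + Im h * (Re h * R + Im h * T)) / 2
           - c * (cmod h)\<^sup>2"
proof -
  have "Re ((of_real p - \<i> * of_real q) / 2 * h) = (Re h * p + Im h * q) / 2"
    by (simp add: algebra_simps)
  moreover have "Re ((of_real ((P - T) / 4) - \<i> * of_real ((Q + R) / 4)) * h\<^sup>2) =
     (P - T) / 4 * ((Re h)\<^sup>2 - (Im h)\<^sup>2) + (Q + R) / 4 * (2 * Re h * Im h)"
    by (simp add: power2_eq_square field_simps)
  ultimately show ?thesis
    unfolding assms cmod_power2 by (simp add: power2_eq_square field_simps)
qed

text \<open>With \<open>h = z - a\<close>, the entire function \<open>F z = exp (\<alpha> h + \<beta> h\<^sup>2 / 2)\<close> is chosen so that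
  \<open>2 Re (\<alpha> h + \<beta> h\<^sup>2 / 2)\<close> is the second-order Taylor polynomial of \<open>\<phi> z - \<phi> a\<close> minus
  its rotation-invariant part \<open>c |h|\<^sup>2\<close>.\<close>

lemma nonharmonic_weight_expansion:
  fixes \<phi> :: "complex \<Rightarrow> real" and a :: complex
  defines "c \<equiv> laplacian \<phi> a / 4"
  assumes \<Omega>: "open \<Omega>" "a \<in> \<Omega>" and sm: "smooth_on \<Omega> \<phi>" and "c \<noteq> 0"
  obtains F R where "R > 0" "ball a R \<subseteq> \<Omega>" "F holomorphic_on UNIV" "F a = 1" "\<And>z. F z \<noteq> 0"
    "\<And>z. z \<in> ball a R \<Longrightarrow>
       \<bar>ln ((cmod (F z))\<^sup>2 * exp (\<phi> a - \<phi> z)) + c * (cmod (z - a))\<^sup>2\<bar> \<le> \<bar>c\<bar> / 2 * (cmod (z - a))\<^sup>2"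
proof -
  define \<phi>\<^sub>x \<phi>\<^sub>y where "\<phi>\<^sub>x = (\<lambda>x. frechet_derivative \<phi> (at x) 1)"
    and "\<phi>\<^sub>y = (\<lambda>x. frechet_derivative \<phi> (at x) \<i>)"
  have d1: "\<phi>\<^sub>x differentiable (at a)" and di: "\<phi>\<^sub>y differentiable (at a)"
    unfolding \<phi>\<^sub>x_def \<phi>\<^sub>y_def
    using smooth_on_differentiable(2)[OF sm] \<Omega>(2) differentiable_on_eq_differentiable_at[OF \<Omega>(1)] by auto
  define A1 Ai where "A1 = frechet_derivative \<phi>\<^sub>x (at a)" and "Ai = frechet_derivative \<phi>\<^sub>y (at a)"
  have "\<bar>c\<bar> / 2 > 0"
    using \<open>c \<noteq> 0\<close> by simp
  from second_order_taylor_estimate[OF \<Omega> smooth_on_differentiable(1)[OF sm]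
      d1[unfolded \<phi>\<^sub>x_def] di[unfolded \<phi>\<^sub>y_def] this]
  obtain R where R: "R > 0" "ball a R \<subseteq> \<Omega>"
    and taylor: "\<And>h. cmod h < R \<Longrightarrow>
      \<bar>\<phi> (a + h) - \<phi> a - (Re h * \<phi>\<^sub>x a + Im h * \<phi>\<^sub>y a) - (Re h * A1 h + Im h * Ai h) / 2\<bar>
        \<le> \<bar>c\<bar> / 2 * (cmod h)\<^sup>2"
    unfolding A1_def Ai_def \<phi>\<^sub>x_def \<phi>\<^sub>y_def by blast
  define \<alpha> where "\<alpha> = (of_real (\<phi>\<^sub>x a) - \<i> * of_real (\<phi>\<^sub>y a)) / 2"
  define \<beta> where "\<beta> = of_real ((A1 1 - Ai \<i>) / 4) - \<i> * of_real ((A1 \<i> + Ai 1) / 4)"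
  define F where "F z = exp (\<alpha> * (z - a) + \<beta> * (z - a)\<^sup>2 / 2)" for z
  show ?thesis
  proof (rule that[of R F])
    show "F holomorphic_on UNIV"
      unfolding F_def by (intro holomorphic_intros) simp
  next
    fix z assume z: "z \<in> ball a R"
    define h where "h = z - a"
    have "cmod h < R"
      using z unfolding h_def by (simp add: dist_norm norm_minus_commute)
    have "A1 h = Re h * A1 1 + Im h * A1 \<i>" "Ai h = Re h * Ai 1 + Im h * Ai \<i>"
      unfolding A1_def Ai_def
      by (simp_all only: linear_complex_to_real[OF linear_frechet_derivative[OF d1], of h]
          linear_complex_to_real[OF linear_frechet_derivative[OF di], of h])
    moreover have "c = (A1 1 + Ai \<i>) / 4"
      unfolding c_def laplacian_def A1_def Ai_def \<phi>\<^sub>x_def \<phi>\<^sub>y_def by simp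
    ultimately have re: "2 * Re (\<alpha> * h + \<beta> * h\<^sup>2 / 2) =
        (Re h * \<phi>\<^sub>x a + Im h * \<phi>\<^sub>y a) + (Re h * A1 h + Im h * Ai h) / 2 - c * (cmod h)\<^sup>2"
      unfolding \<alpha>_def \<beta>_def by (simp only: Re_quadratic_exponent)
    have "(cmod (F z))\<^sup>2 = (exp (Re (\<alpha> * h + \<beta> * h\<^sup>2 / 2)))\<^sup>2"
      unfolding F_def norm_exp_eq_Re h_def[symmetric] ..
    also have "\<dots> = exp (2 * Re (\<alpha> * h + \<beta> * h\<^sup>2 / 2))"
      by (simp only: power2_eq_square mult_2 exp_add)
    finally have "(cmod (F z))\<^sup>2 = exp (2 * Re (\<alpha> * h + \<beta> * h\<^sup>2 / 2))" .
    then have "ln ((cmod (F z))\<^sup>2 * exp (\<phi> a - \<phi> z)) = 2 * Re (\<alpha> * h + \<beta> * h\<^sup>2 / 2) + (\<phi> a - \<phi> z)"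
      by (simp add: exp_add[symmetric])
    then have "ln ((cmod (F z))\<^sup>2 * exp (\<phi> a - \<phi> z)) + c * (cmod h)\<^sup>2 =
        - (\<phi> (a + h) - \<phi> a - (Re h * \<phi>\<^sub>x a + Im h * \<phi>\<^sub>y a) - (Re h * A1 h + Im h * Ai h) / 2)"
      unfolding re by (simp add: h_def)
    then show "\<bar>ln ((cmod (F z))\<^sup>2 * exp (\<phi> a - \<phi> z)) + c * (cmod (z - a))\<^sup>2\<bar> \<le> \<bar>c\<bar> / 2 * (cmod (z - a))\<^sup>2"
      using taylor[OF \<open>cmod h < R\<close>] unfolding h_def[symmetric] by (simp only: abs_minus_cancel)
  qed (use R in \<open>simp_all add: F_def\<close>)
qed

lemma Omega_delta_iff:
  "(a, r) \<in> Omega_delta \<Omega> \<longleftrightarrow> a \<in> \<Omega> \<and> 0 < r \<and> (\<exists>R > r. ball a R \<subseteq> \<Omega>)"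
proof -
  have "ereal r < bdist \<Omega> a \<longleftrightarrow> (\<exists>R > r. ball a R \<subseteq> \<Omega>)" if "0 < r"
    unfolding bdist_def less_SUP_iff using that by (auto intro: less_trans)
  then show ?thesis
    unfolding Omega_delta_def by auto
qed

lemma tendsto_at_left_le:
  fixes f :: "real \<Rightarrow> real"
  assumes "(f \<longlongrightarrow> L) (at_left r)" "a < r" "\<And>s. a < s \<Longrightarrow> s < r \<Longrightarrow> f s \<le> y"
  shows "L \<le> y"
  using eventually_at_left_real[OF assms(2)] assms(3)
  by (intro tendsto_upperbound[OF assms(1)]) (auto elim: eventually_mono)

lemma tendsto_at_left_ge:
  fixes f :: "real \<Rightarrow> real"
  assumes "(f \<longlongrightarrow> L) (at_left r)" "a < r" "\<And>s. a < s \<Longrightarrow> s < r \<Longrightarrow> y \<le> f s"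
  shows "y \<le> L"
  using eventually_at_left_real[OF assms(2)] assms(3)
  by (intro tendsto_lowerbound[OF assms(1)]) (auto elim: eventually_mono)

lemma continuous_nonneg_integral_ball_eq_0:
  fixes f :: "complex \<Rightarrow> real"
  assumes cont: "continuous_on (cball a s) f" and nn: "\<And>z. z \<in> ball a s \<Longrightarrow> 0 \<le> f z"
    and int0: "integral\<^sup>L lborel (\<lambda>z. indicator (ball a s) z * f z) = 0" and z0: "z0 \<in> ball a s"
  shows "f z0 = 0"
proof (rule ccontr)
  assume "f z0 \<noteq> 0"
  with nn[OF z0] have pos: "f z0 > 0" by simp
  have "integrable lborel (\<lambda>z. indicator (ball a s) z * f z)"
    using integrable_indicator_ball[OF cont] by simp
  with int0 nn have "AE z in lborel. indicator (ball a s) z * f z = 0"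
    by (subst (asm) integral_nonneg_eq_0_iff_AE) (auto simp: indicator_def)
  then obtain N where N: "{z. indicator (ball a s) z * f z \<noteq> 0} \<subseteq> N" "emeasure lborel N = 0" "N \<in> sets lborel"
    by (auto elim: AE_E)
  obtain d where d: "d > 0" "\<And>x. x \<in> cball a s \<Longrightarrow> dist x z0 < d \<Longrightarrow> dist (f x) (f z0) < f z0"
    using cont[unfolded continuous_on_iff] z0 pos by (meson ball_subset_cball subsetD)
  define e where "e = min d (s - dist a z0)"
  have "e > 0"
    using d z0 unfolding e_def by auto
  have "ball z0 e \<subseteq> N"
  proof
    fix x assume x: "x \<in> ball z0 e"
    then have "x \<in> ball a s"
      using dist_triangle[of a x z0] unfolding e_def by (auto simp: dist_commute)
    moreover have "f x > 0"
      using d(2)[of x] x \<open>x \<in> ball a s\<close> unfolding e_def by (auto simp: dist_commute dist_real_def)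
    ultimately show "x \<in> N"
      using N(1) by auto
  qed
  then have "emeasure lborel (ball z0 e) \<le> emeasure lborel N"
    by (rule emeasure_mono[OF _ N(3)])
  then show False
    using N(2) emeasure_ball_complex[of e z0] \<open>e > 0\<close> by simp
qed

lemma nn_integral_ball_eq_integral:
  fixes g :: "complex \<Rightarrow> real"
  assumes "continuous_on (cball a s) g" "\<And>z. z \<in> ball a s \<Longrightarrow> 0 \<le> g z"
  shows "(\<integral>\<^sup>+ z \<in> ball a s. ennreal (g z) \<partial>lborel) = ennreal (integral\<^sup>L lborel (\<lambda>z. indicator (ball a s) z * g z))"
proof -
  have "(\<integral>\<^sup>+ z \<in> ball a s. ennreal (g z) \<partial>lborel) = (\<integral>\<^sup>+ z. ennreal (indicator (ball a s) z * g z) \<partial>lborel)"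
    by (intro nn_integral_cong) (auto simp: indicator_def)
  also have "\<dots> = ennreal (integral\<^sup>L lborel (\<lambda>z. indicator (ball a s) z * g z))"
    using integrable_indicator_ball[OF assms(1)] assms(2)
    by (intro nn_integral_eq_integral) (auto simp: indicator_def)
  finally show ?thesis .
qed

lemma integral_ball_le_nn_integral_ball:
  fixes g :: "complex \<Rightarrow> real"
  assumes "continuous_on (cball a s) g" "\<And>z. z \<in> ball a r \<Longrightarrow> 0 \<le> g z" "s \<le> r"
  shows "ennreal (integral\<^sup>L lborel (\<lambda>z. indicator (ball a s) z * g z)) \<le> (\<integral>\<^sup>+ z \<in> ball a r. ennreal (g z) \<partial>lborel)"
proof -
  have "ennreal (integral\<^sup>L lborel (\<lambda>z. indicator (ball a s) z * g z)) = (\<integral>\<^sup>+ z \<in> ball a s. ennreal (g z) \<partial>lborel)"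
    using assms by (intro nn_integral_ball_eq_integral[symmetric]) auto
  also have "\<dots> \<le> (\<integral>\<^sup>+ z \<in> ball a r. ennreal (g z) \<partial>lborel)"
    using assms(3) by (intro nn_integral_mono) (auto simp: indicator_def)
  finally show ?thesis .
qed

lemma integral_ball_mono_radius:
  fixes g :: "complex \<Rightarrow> real"
  assumes "continuous_on (cball a s') g" "\<And>z. 0 \<le> g z" "s \<le> s'"
  shows "integral\<^sup>L lborel (\<lambda>z. indicator (ball a s) z * g z) \<le> integral\<^sup>L lborel (\<lambda>z. indicator (ball a s') z * g z)"
proof (rule integral_mono)
  show "integrable lborel (\<lambda>z. indicator (ball a s') z * g z)"
    using integrable_indicator_ball[OF assms(1)] by simp
  have "continuous_on (cball a s) g"
    by (rule continuous_on_subset[OF assms(1)]) (use assms(3) in auto)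
  from integrable_indicator_ball[OF this]
  show "integrable lborel (\<lambda>z. indicator (ball a s) z * g z)"
    by simp
qed (use assms in \<open>auto simp: indicator_def\<close>)

lemma nn_integral_ball_norm_sq_ge:
  assumes hol: "k holomorphic_on ball a r" and r: "r > 0"
  shows "ennreal (pi * r\<^sup>2 * (cmod (k a))\<^sup>2) \<le> (\<integral>\<^sup>+ z \<in> ball a r. ennreal ((cmod (k z))\<^sup>2) \<partial>lborel)"
    (is "_ \<le> ?X")
proof (cases ?X)
  case (real x)
  have bound: "pi * s\<^sup>2 * (cmod (k a))\<^sup>2 \<le> x" if s: "0 < s" "s < r" for s
  proof -
    have "continuous_on (cball a s) k"
      using holomorphic_on_imp_continuous_on[OF hol] by (rule continuous_on_subset) (use s in auto)
    then have "ennreal (integral\<^sup>L lborel (\<lambda>z. indicator (ball a s) z * (cmod (k z))\<^sup>2)) \<le> ?X"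
      using s by (intro integral_ball_le_nn_integral_ball continuous_intros) auto
    then have "integral\<^sup>L lborel (\<lambda>z. indicator (ball a s) z * (cmod (k z))\<^sup>2) \<le> x"
      using real by (simp add: ennreal_le_iff)
    moreover define J where "J = integral\<^sup>L lborel (\<lambda>z. indicator (ball a s) z * (cmod (k z - k a))\<^sup>2)"
    have "0 \<le> J"
      unfolding J_def by (rule Bochner_Integration.integral_nonneg) simp
    ultimately show ?thesis
      unfolding integral_ball_norm_sq_holomorphic[OF hol less_imp_le[OF s(1)] s(2)] J_def[symmetric]
      by linarith
  qed
  have "pi * r\<^sup>2 * (cmod (k a))\<^sup>2 \<le> x"
    by (rule tendsto_at_left_le[where f = "\<lambda>s. pi * s\<^sup>2 * (cmod (k a))\<^sup>2", OF _ r bound])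
       (auto intro!: tendsto_eq_intros)
  then show ?thesis
    using real by (simp add: ennreal_le_iff)
qed simp

lemma nn_integral_ball_norm_sq_le_imp_constant:
  assumes hol: "k holomorphic_on ball a r" and r: "r > 0"
    and le: "(\<integral>\<^sup>+ z \<in> ball a r. ennreal ((cmod (k z))\<^sup>2) \<partial>lborel) \<le> ennreal (pi * r\<^sup>2 * (cmod (k a))\<^sup>2)"
    and z: "z \<in> ball a r"
  shows "k z = k a"
proof -
  define J where "J s = integral\<^sup>L lborel (\<lambda>z. indicator (ball a s) z * (cmod (k z - k a))\<^sup>2)" for s
  have cont: "continuous_on (cball a s) k" if "s < r" for s
    using holomorphic_on_imp_continuous_on[OF hol] by (rule continuous_on_subset) (use that in auto)
  have J: "J s \<le> pi * (r\<^sup>2 - s\<^sup>2) * (cmod (k a))\<^sup>2" if s: "0 \<le> s" "s < r" for s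
  proof -
    have "ennreal (integral\<^sup>L lborel (\<lambda>z. indicator (ball a s) z * (cmod (k z))\<^sup>2))
        \<le> (\<integral>\<^sup>+ z \<in> ball a r. ennreal ((cmod (k z))\<^sup>2) \<partial>lborel)"
      using cont[OF s(2)] s by (intro integral_ball_le_nn_integral_ball continuous_intros) auto
    then have "ennreal (integral\<^sup>L lborel (\<lambda>z. indicator (ball a s) z * (cmod (k z))\<^sup>2))
        \<le> ennreal (pi * r\<^sup>2 * (cmod (k a))\<^sup>2)"
      using le by (rule order_trans)
    then have "integral\<^sup>L lborel (\<lambda>z. indicator (ball a s) z * (cmod (k z))\<^sup>2) \<le> pi * r\<^sup>2 * (cmod (k a))\<^sup>2"
      by (simp add: ennreal_le_iff)
    then show ?thesis
      using integral_ball_norm_sq_holomorphic[OF hol s] unfolding J_def by (simp add: algebra_simps)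
  qed
  define s where "s = (dist a z + r) / 2"
  have s: "0 \<le> s" "s < r" "z \<in> ball a s"
    using z r unfolding s_def by auto
  have "J s \<le> 0"
  proof (rule tendsto_at_left_ge[where f = "\<lambda>s'. pi * (r\<^sup>2 - s'\<^sup>2) * (cmod (k a))\<^sup>2", OF _ s(2)])
    show "((\<lambda>s'. pi * (r\<^sup>2 - s'\<^sup>2) * (cmod (k a))\<^sup>2) \<longlongrightarrow> 0) (at_left r)"
      by (auto intro!: tendsto_eq_intros)
    fix s' assume "s < s'" "s' < r"
    have "continuous_on (cball a s') (\<lambda>z. (cmod (k z - k a))\<^sup>2)"
      using cont[OF \<open>s' < r\<close>] by (intro continuous_intros)
    then have "J s \<le> J s'"
      unfolding J_def using \<open>s < s'\<close> by (intro integral_ball_mono_radius) auto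
    then show "J s \<le> pi * (r\<^sup>2 - s'\<^sup>2) * (cmod (k a))\<^sup>2"
      using J[of s'] \<open>s < s'\<close> \<open>s' < r\<close> s(1) by linarith
  qed
  then have "J s = 0"
    unfolding J_def by (intro antisym Bochner_Integration.integral_nonneg) auto
  moreover have "continuous_on (cball a s) (\<lambda>z. (cmod (k z - k a))\<^sup>2)"
    using cont[OF s(2)] by (intro continuous_intros)
  ultimately have "(cmod (k z - k a))\<^sup>2 = 0"
    using s(3) unfolding J_def by (intro continuous_nonneg_integral_ball_eq_0) simp_all
  then show ?thesis
    by simp
qed

lemma integral_ball_less:
  fixes W :: "complex \<Rightarrow> real"
  assumes cont: "continuous_on (cball a r) W" and r: "r > 0"
    and le: "\<And>z. z \<in> ball a r \<Longrightarrow> W z \<le> 1" and z0: "z0 \<in> ball a r" "W z0 < 1"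
  shows "integral\<^sup>L lborel (\<lambda>z. indicator (ball a r) z * W z) < pi * r\<^sup>2"
proof -
  define D where "D = integral\<^sup>L lborel (\<lambda>z. indicator (ball a r) z * (1 - W z))"
  have "continuous_on (cball a r) (\<lambda>z. 1 - W z)"
    using cont by (intro continuous_intros)
  then have "D \<noteq> 0"
    using continuous_nonneg_integral_ball_eq_0[of a r "\<lambda>z. 1 - W z" z0] le z0 unfolding D_def by auto
  moreover have "D \<ge> 0"
    unfolding D_def by (rule Bochner_Integration.integral_nonneg) (use le in \<open>auto simp: indicator_def\<close>)
  moreover have "D = pi * r\<^sup>2 - integral\<^sup>L lborel (\<lambda>z. indicator (ball a r) z * W z)"
  proof -
    have "integrable lborel (\<lambda>z. indicator (ball a r) z * W z)"
      using integrable_indicator_ball[OF cont] by simp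
    moreover have "integrable lborel (\<lambda>z. indicator (ball a r) z * (1::real))"
      using integrable_indicator_ball[of a r "\<lambda>_. 1::real"] by simp
    moreover have "integral\<^sup>L lborel (\<lambda>z. indicator (ball a r) z * (1::real)) = pi * r\<^sup>2"
      using integral_indicator_ball_const[of r a "1::real"] r by simp
    ultimately show ?thesis
      unfolding D_def by (simp add: right_diff_distrib)
  qed
  ultimately show ?thesis
    by linarith
qed

text \<open>Between radius \<open>r/2\<close> and \<open>r\<close> the weight gains \<open>\<eta>\<close>, and the mass of \<open>|k|\<^sup>2\<close> there
  is at least that of the constant \<open>k a = 1\<close>, namely \<open>3\<pi>r\<^sup>2/4\<close>.\<close>

lemma nn_integral_ball_weighted_norm_sq_ge:
  fixes W :: "complex \<Rightarrow> real"
  assumes hol: "k holomorphic_on ball a r" and r: "r > 0" and ka: "k a = 1" and \<eta>: "\<eta> \<ge> 0"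
    and W1: "\<And>z. z \<in> ball a r \<Longrightarrow> 1 \<le> W z"
    and W2: "\<And>z. z \<in> ball a r \<Longrightarrow> r / 2 \<le> cmod (z - a) \<Longrightarrow> 1 + \<eta> \<le> W z"
  shows "ennreal (pi * r\<^sup>2 * (1 + 3 * \<eta> / 4)) \<le> (\<integral>\<^sup>+ z \<in> ball a r. ennreal (W z * (cmod (k z))\<^sup>2) \<partial>lborel)"
    (is "_ \<le> ?X")
proof (cases ?X)
  case (real x)
  define I J where "I \<rho> = integral\<^sup>L lborel (\<lambda>z. indicator (ball a \<rho>) z * (cmod (k z))\<^sup>2)"
    and "J \<rho> = integral\<^sup>L lborel (\<lambda>z. indicator (ball a \<rho>) z * (cmod (k z - k a))\<^sup>2)" for \<rho>
  have bound: "(1 + \<eta>) * (pi * s\<^sup>2) - \<eta> * (pi * (r / 2)\<^sup>2) \<le> x" if s: "r / 2 < s" "s < r" for s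
  proof -
    have cont: "continuous_on (cball a s) k"
      using holomorphic_on_imp_continuous_on[OF hol] by (rule continuous_on_subset) (use s in auto)
    then have cont2: "continuous_on (cball a (r / 2)) k"
      by (rule continuous_on_subset) (use s in auto)
    have "integrable lborel (\<lambda>z. indicator (ball a \<rho>) z * (cmod (k z))\<^sup>2)"
      if "continuous_on (cball a \<rho>) k" for \<rho>
      using integrable_indicator_ball[of a \<rho> "\<lambda>z. (cmod (k z))\<^sup>2"] that by (simp add: continuous_intros)
    note int = this[OF cont] this[OF cont2]
    define G where "G z = (1 + \<eta>) * (indicator (ball a s) z * (cmod (k z))\<^sup>2)
        - \<eta> * (indicator (ball a (r / 2)) z * (cmod (k z))\<^sup>2)" for z
    have "ennreal (integral\<^sup>L lborel G) = (\<integral>\<^sup>+ z. ennreal (G z) \<partial>lborel)"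
      using int \<eta> s unfolding G_def
      by (intro nn_integral_eq_integral[symmetric]) (auto intro!: AE_I2 simp: indicator_def algebra_simps)
    also have "\<dots> \<le> ?X"
    proof (rule nn_integral_mono)
      fix z
      have "G z \<le> W z * (cmod (k z))\<^sup>2 * indicator (ball a r) z"
      proof (cases "z \<in> ball a (r / 2)")
        case True
        then show ?thesis
          using W1[of z] s mult_right_mono[of 1 "W z" "(cmod (k z))\<^sup>2"] unfolding G_def
          by (auto simp: algebra_simps)
      next
        case False
        then have "z \<in> ball a s \<Longrightarrow> r / 2 \<le> cmod (z - a)"
          by (simp add: dist_norm norm_minus_commute)
        then show ?thesis
          using False W1[of z] W2[of z] s unfolding G_def by (auto simp: indicator_def mult_right_mono)
      qed
      then show "ennreal (G z) \<le> ennreal (W z * (cmod (k z))\<^sup>2) * indicator (ball a r) z"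
        by (auto simp: indicator_def ennreal_leI ennreal_neg)
    qed
    finally have "(1 + \<eta>) * I s - \<eta> * I (r / 2) \<le> x"
      using real int unfolding G_def I_def by (simp add: ennreal_le_iff)
    moreover have "I s = pi * s\<^sup>2 + J s" "I (r / 2) = pi * (r / 2)\<^sup>2 + J (r / 2)"
      using integral_ball_norm_sq_holomorphic[OF hol, of s] integral_ball_norm_sq_holomorphic[OF hol, of "r / 2"]
        s r ka unfolding I_def J_def by auto
    moreover have "J (r / 2) \<le> J s"
      using cont unfolding J_def by (intro integral_ball_mono_radius continuous_intros) (use s in auto)
    moreover have "0 \<le> J s"
      unfolding J_def by (rule Bochner_Integration.integral_nonneg) simp
    ultimately show ?thesis
      using mult_left_mono[OF \<open>J (r / 2) \<le> J s\<close> \<eta>] by (simp add: algebra_simps)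
  qed
  have "(1 + \<eta>) * (pi * r\<^sup>2) - \<eta> * (pi * (r / 2)\<^sup>2) \<le> x"
    by (rule tendsto_at_left_le[where f = "\<lambda>s. (1 + \<eta>) * (pi * s\<^sup>2) - \<eta> * (pi * (r / 2)\<^sup>2)"
          and a = "r / 2", OF _ _ bound])
       (use r in \<open>auto intro!: tendsto_eq_intros\<close>)
  then show ?thesis
    using real by (simp add: ennreal_le_iff power2_eq_square field_simps)
qed simp

definition unique_optimal_L2_extension :: "(complex \<Rightarrow> real) \<Rightarrow> complex \<Rightarrow> real \<Rightarrow> bool" where
  "unique_optimal_L2_extension \<phi> a r \<longleftrightarrow>
     (\<exists>f. f holomorphic_on ball a r \<and> f a = 1 \<and>
        (\<integral>\<^sup>+ z \<in> ball a r. ennreal ((cmod (f z))\<^sup>2 * exp (- \<phi> z)) \<partial>lborel)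
          \<le> ennreal (pi * r\<^sup>2 * exp (- \<phi> a)) \<and>
        (\<forall>g. g holomorphic_on ball a r \<and> g a = 1 \<and>
           (\<integral>\<^sup>+ z \<in> ball a r. ennreal ((cmod (g z))\<^sup>2 * exp (- \<phi> z)) \<partial>lborel)
             \<le> ennreal (pi * r\<^sup>2 * exp (- \<phi> a))
           \<longrightarrow> (\<forall>z \<in> ball a r. g z = f z)))"

lemma set_nn_integral_eq_set_lebesgue_integral:
  fixes g :: "'a \<Rightarrow> real"
  assumes "set_integrable M A g" "\<And>z. z \<in> A \<Longrightarrow> 0 \<le> g z"
  shows "(\<integral>\<^sup>+ z \<in> A. ennreal (g z) \<partial>M) = ennreal (set_lebesgue_integral M A g)"
  using assms unfolding set_lebesgue_integral_def set_integrable_def nn_integral_set_ennreal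
  by (subst nn_integral_eq_integral) (auto simp: indicator_def mult.commute intro!: AE_I2)

text \<open>On the disc, the weight \<open>e\<^sup>-\<^sup>\<phi>\<close> is \<open>e\<^sup>-\<^sup>\<phi>\<^sup>(\<^sup>a\<^sup>) W / |F|\<^sup>2\<close> with \<open>F\<close> holomorphic, nonvanishing and
  normalized at the centre; dividing by \<open>F\<close> reduces all questions to the weight \<open>W\<close>.\<close>

locale disc_weight_factorization =
  fixes \<phi> :: "complex \<Rightarrow> real" and a :: complex and r :: real
    and F :: "complex \<Rightarrow> complex" and W :: "complex \<Rightarrow> real"
  assumes r_pos: "r > 0"
    and holomorphic_F: "F holomorphic_on ball a r" and F_centre: "F a = 1"
    and F_nonzero: "\<And>z. z \<in> ball a r \<Longrightarrow> F z \<noteq> 0"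
    and continuous_W: "continuous_on (cball a r) W"
    and weight_eq: "\<And>z. z \<in> ball a r \<Longrightarrow> (cmod (F z))\<^sup>2 * exp (- \<phi> z) = exp (- \<phi> a) * W z"
begin

lemma weighted_nn_integral_eq:
  assumes holg: "g holomorphic_on ball a r"
  shows "(\<integral>\<^sup>+ z \<in> ball a r. ennreal ((cmod (g z))\<^sup>2 * exp (- \<phi> z)) \<partial>lborel) =
         ennreal (exp (- \<phi> a)) * (\<integral>\<^sup>+ z \<in> ball a r. ennreal (W z * (cmod (g z / F z))\<^sup>2) \<partial>lborel)"
proof -
  have "continuous_on (ball a r) (\<lambda>z. W z * (cmod (g z / F z))\<^sup>2)"
    using holomorphic_on_imp_continuous_on[OF holomorphic_F] holomorphic_on_imp_continuous_on[OF holg]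
      continuous_on_subset[OF continuous_W ball_subset_cball] F_nonzero
    by (intro continuous_intros) auto
  then have "(\<lambda>z. indicator (ball a r) z *\<^sub>R (W z * (cmod (g z / F z))\<^sup>2)) \<in> borel_measurable borel"
    by (intro borel_measurable_continuous_on_indicator) simp_all
  then have "(\<lambda>z. ennreal (indicator (ball a r) z *\<^sub>R (W z * (cmod (g z / F z))\<^sup>2))) \<in> borel_measurable lborel"
    by measurable
  moreover have "(\<lambda>z. ennreal (indicator (ball a r) z *\<^sub>R (W z * (cmod (g z / F z))\<^sup>2))) =
      (\<lambda>z. ennreal (W z * (cmod (g z / F z))\<^sup>2) * indicator (ball a r) z)"
    by (auto simp: indicator_def)
  ultimately have "(\<lambda>z. ennreal (W z * (cmod (g z / F z))\<^sup>2) * indicator (ball a r) z) \<in> borel_measurable lborel"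
    by simp
  then have "ennreal (exp (- \<phi> a)) * (\<integral>\<^sup>+ z \<in> ball a r. ennreal (W z * (cmod (g z / F z))\<^sup>2) \<partial>lborel) =
      (\<integral>\<^sup>+ z. ennreal (exp (- \<phi> a)) * (ennreal (W z * (cmod (g z / F z))\<^sup>2) * indicator (ball a r) z) \<partial>lborel)"
    by (rule nn_integral_cmult[symmetric])
  also have "\<dots> = (\<integral>\<^sup>+ z \<in> ball a r. ennreal ((cmod (g z))\<^sup>2 * exp (- \<phi> z)) \<partial>lborel)"
  proof (rule nn_integral_cong)
    fix z
    show "ennreal (exp (- \<phi> a)) * (ennreal (W z * (cmod (g z / F z))\<^sup>2) * indicator (ball a r) z) =
          ennreal ((cmod (g z))\<^sup>2 * exp (- \<phi> z)) * indicator (ball a r) z"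
    proof (cases "z \<in> ball a r")
      case True
      then have "(cmod (g z))\<^sup>2 * exp (- \<phi> z) = exp (- \<phi> a) * (W z * (cmod (g z / F z))\<^sup>2)"
        using weight_eq[OF True] F_nonzero[OF True] by (simp add: norm_divide power_divide field_simps)
      then show ?thesis
        using True by (simp add: ennreal_mult'[symmetric])
    qed simp
  qed
  finally show ?thesis ..
qed

lemma W_nonneg:
  assumes "z \<in> ball a r"
  shows "0 \<le> W z"
proof -
  have "0 \<le> exp (- \<phi> a) * W z"
    using weight_eq[OF assms] by (metis exp_ge_zero zero_le_power2 mult_nonneg_nonneg)
  then show ?thesis
    by (simp add: zero_le_mult_iff)
qed

lemma set_integrable_F: "set_integrable lborel (ball a r) (\<lambda>z. (cmod (F z))\<^sup>2 * exp (- \<phi> z))"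
  and set_integral_F: "set_lebesgue_integral lborel (ball a r) (\<lambda>z. (cmod (F z))\<^sup>2 * exp (- \<phi> z)) =
      exp (- \<phi> a) * integral\<^sup>L lborel (\<lambda>z. indicator (ball a r) z * W z)"
proof -
  have eq: "indicator (ball a r) z *\<^sub>R ((cmod (F z))\<^sup>2 * exp (- \<phi> z)) =
      exp (- \<phi> a) * (indicator (ball a r) z * W z)" for z
    using weight_eq[of z] by (auto simp: indicator_def)
  show "set_integrable lborel (ball a r) (\<lambda>z. (cmod (F z))\<^sup>2 * exp (- \<phi> z))"
    unfolding set_integrable_def eq using integrable_indicator_ball[OF continuous_W] by simp
  show "set_lebesgue_integral lborel (ball a r) (\<lambda>z. (cmod (F z))\<^sup>2 * exp (- \<phi> z)) =
      exp (- \<phi> a) * integral\<^sup>L lborel (\<lambda>z. indicator (ball a r) z * W z)"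
    unfolding set_lebesgue_integral_def eq by simp
qed

lemma F_in_A2: "F \<in> A2 (ball a r) \<phi>"
  using holomorphic_F set_integrable_F unfolding A2_def by simp

lemma L_index_le: "L_index \<phi> a r \<le> integral\<^sup>L lborel (\<lambda>z. indicator (ball a r) z * W z) / (pi * r\<^sup>2)"
proof -
  have "L_index \<phi> a r \<le> set_lebesgue_integral lborel (ball a r) (\<lambda>z. (cmod (F z))\<^sup>2 * exp (- \<phi> z))
      / (pi * r\<^sup>2 * exp (- \<phi> a))"
    unfolding L_index_def
  proof (rule cInf_lower)
    show "bdd_below {set_lebesgue_integral lborel (ball a r) (\<lambda>z. (cmod (f z))\<^sup>2 * exp (- \<phi> z)) /
        (pi * r\<^sup>2 * exp (- \<phi> a)) |f. f \<in> A2 (ball a r) \<phi> \<and> f a = 1}"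
      unfolding set_lebesgue_integral_def
      using r_pos
      by (intro bdd_belowI[of _ 0]) (auto intro!: divide_nonneg_pos Bochner_Integration.integral_nonneg)
  qed (use F_in_A2 F_centre in blast)
  then show ?thesis
    unfolding set_integral_F using r_pos by simp
qed

lemma L_index_ge:
  assumes lower: "\<And>k. k holomorphic_on ball a r \<Longrightarrow> k a = 1 \<Longrightarrow>
      ennreal (pi * r\<^sup>2 * q) \<le> (\<integral>\<^sup>+ z \<in> ball a r. ennreal (W z * (cmod (k z))\<^sup>2) \<partial>lborel)"
  shows "q \<le> L_index \<phi> a r"
  unfolding L_index_def
proof (rule cInf_greatest)
  fix x assume "x \<in> {set_lebesgue_integral lborel (ball a r) (\<lambda>z. (cmod (f z))\<^sup>2 * exp (- \<phi> z)) /
      (pi * r\<^sup>2 * exp (- \<phi> a)) |f. f \<in> A2 (ball a r) \<phi> \<and> f a = 1}"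
  then obtain f where f: "f holomorphic_on ball a r" "f a = 1"
    and int: "set_integrable lborel (ball a r) (\<lambda>z. (cmod (f z))\<^sup>2 * exp (- \<phi> z))"
    and x: "x = set_lebesgue_integral lborel (ball a r) (\<lambda>z. (cmod (f z))\<^sup>2 * exp (- \<phi> z)) /
      (pi * r\<^sup>2 * exp (- \<phi> a))"
    unfolding A2_def by blast
  have "(\<lambda>z. f z / F z) holomorphic_on ball a r"
    using f(1) holomorphic_F F_nonzero by (intro holomorphic_intros)
  then have "ennreal (exp (- \<phi> a)) * ennreal (pi * r\<^sup>2 * q) \<le>
      (\<integral>\<^sup>+ z \<in> ball a r. ennreal ((cmod (f z))\<^sup>2 * exp (- \<phi> z)) \<partial>lborel)"
    unfolding weighted_nn_integral_eq[OF f(1)] using f(2) F_centre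
    by (intro mult_left_mono lower) auto
  also have "\<dots> = ennreal (set_lebesgue_integral lborel (ball a r) (\<lambda>z. (cmod (f z))\<^sup>2 * exp (- \<phi> z)))"
    by (rule set_nn_integral_eq_set_lebesgue_integral[OF int]) simp
  finally have "ennreal (exp (- \<phi> a) * (pi * r\<^sup>2 * q)) \<le> ennreal (set_lebesgue_integral lborel (ball a r)
      (\<lambda>z. (cmod (f z))\<^sup>2 * exp (- \<phi> z)))"
    by (simp add: ennreal_mult'[symmetric])
  moreover have "0 \<le> set_lebesgue_integral lborel (ball a r) (\<lambda>z. (cmod (f z))\<^sup>2 * exp (- \<phi> z))"
    unfolding set_lebesgue_integral_def by (rule Bochner_Integration.integral_nonneg) simp
  ultimately have "exp (- \<phi> a) * (pi * r\<^sup>2 * q) \<le>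
      set_lebesgue_integral lborel (ball a r) (\<lambda>z. (cmod (f z))\<^sup>2 * exp (- \<phi> z))"
    by (subst (asm) ennreal_le_iff)
  then show "q \<le> x"
    unfolding x using r_pos by (simp add: field_simps)
qed (use F_in_A2 F_centre in blast)


lemma nn_integral_W_eq: "(\<integral>\<^sup>+ z \<in> ball a r. ennreal (W z * c) \<partial>lborel) =
    ennreal (c * integral\<^sup>L lborel (\<lambda>z. indicator (ball a r) z * W z))" if "c \<ge> 0"
proof -
  have "(\<integral>\<^sup>+ z \<in> ball a r. ennreal (W z * c) \<partial>lborel) =
      ennreal (integral\<^sup>L lborel (\<lambda>z. indicator (ball a r) z * (W z * c)))"
    using continuous_W that W_nonneg by (intro nn_integral_ball_eq_integral continuous_intros) auto
  then show ?thesis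
    by (simp add: mult_ac)
qed

lemma nn_integral_F_eq:
  "(\<integral>\<^sup>+ z \<in> ball a r. ennreal ((cmod (F z))\<^sup>2 * exp (- \<phi> z)) \<partial>lborel) =
   ennreal (exp (- \<phi> a) * integral\<^sup>L lborel (\<lambda>z. indicator (ball a r) z * W z))"
  using set_nn_integral_eq_set_lebesgue_integral[OF set_integrable_F] set_integral_F by simp


lemma unit_weight:
  assumes W1: "\<And>z. z \<in> ball a r \<Longrightarrow> W z = 1"
  shows "L_index \<phi> a r = 1" and "unique_optimal_L2_extension \<phi> a r"
proof -
  have "(\<lambda>z. indicator (ball a r) z * W z) = (\<lambda>z. indicator (ball a r) z *\<^sub>R (1::real))"
    by (auto simp: indicator_def W1)
  then have IW: "integral\<^sup>L lborel (\<lambda>z. indicator (ball a r) z * W z) = pi * r\<^sup>2"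
    using integral_indicator_ball_const[of r a "1::real"] r_pos by simp
  have W_drop: "(\<integral>\<^sup>+ z \<in> ball a r. ennreal (W z * u z) \<partial>lborel) = (\<integral>\<^sup>+ z \<in> ball a r. ennreal (u z) \<partial>lborel)"
    for u
    by (rule nn_integral_cong) (simp add: indicator_def W1)
  have lower: "ennreal (pi * r\<^sup>2 * 1) \<le> (\<integral>\<^sup>+ z \<in> ball a r. ennreal (W z * (cmod (k z))\<^sup>2) \<partial>lborel)"
    if "k holomorphic_on ball a r" "k a = 1" for k
    using nn_integral_ball_norm_sq_ge[OF that(1) r_pos] that(2) unfolding W_drop by simp
  show "L_index \<phi> a r = 1"
    using L_index_le L_index_ge[OF lower] IW r_pos by simp
  show "unique_optimal_L2_extension \<phi> a r"
    unfolding unique_optimal_L2_extension_def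
  proof (intro exI conjI allI impI)
    show "F holomorphic_on ball a r" "F a = 1"
      by (fact holomorphic_F, fact F_centre)
    show "(\<integral>\<^sup>+ z \<in> ball a r. ennreal ((cmod (F z))\<^sup>2 * exp (- \<phi> z)) \<partial>lborel) \<le> ennreal (pi * r\<^sup>2 * exp (- \<phi> a))"
      unfolding nn_integral_F_eq IW by (simp add: mult_ac)
    fix g assume g: "g holomorphic_on ball a r \<and> g a = 1 \<and>
      (\<integral>\<^sup>+ z \<in> ball a r. ennreal ((cmod (g z))\<^sup>2 * exp (- \<phi> z)) \<partial>lborel) \<le> ennreal (pi * r\<^sup>2 * exp (- \<phi> a))"
    define k where "k z = g z / F z" for z
    have holk: "k holomorphic_on ball a r"
      unfolding k_def using g holomorphic_F F_nonzero by (intro holomorphic_intros) auto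
    have "ennreal (exp (- \<phi> a)) * (\<integral>\<^sup>+ z \<in> ball a r. ennreal ((cmod (k z))\<^sup>2) \<partial>lborel)
        \<le> ennreal (exp (- \<phi> a)) * ennreal (pi * r\<^sup>2)"
      using g unfolding weighted_nn_integral_eq[OF conjunct1[OF g]] W_drop k_def
      by (simp add: ennreal_mult'[symmetric] mult_ac)
    then have "(\<integral>\<^sup>+ z \<in> ball a r. ennreal ((cmod (k z))\<^sup>2) \<partial>lborel) \<le> ennreal (pi * r\<^sup>2 * (cmod (k a))\<^sup>2)"
      using g F_centre unfolding k_def by (subst (asm) ennreal_mult_le_mult_iff) auto
    from nn_integral_ball_norm_sq_le_imp_constant[OF holk r_pos this]
    show "\<forall>z \<in> ball a r. g z = F z"
      using g F_centre F_nonzero unfolding k_def by (auto simp: field_simps)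
  qed
qed


text \<open>If the weight drops below \<open>1\<close> somewhere, \<open>F\<close> beats the bound strictly, so that the
  perturbation \<open>F (1 + \<epsilon> (z - a))\<close> still satisfies it.\<close>

lemma subunit_weight:
  assumes W1: "\<And>z. z \<in> ball a r \<Longrightarrow> W z \<le> 1" and z0: "z0 \<in> ball a r" "W z0 < 1"
  shows "L_index \<phi> a r < 1" and "\<not> unique_optimal_L2_extension \<phi> a r"
proof -
  define IW where "IW = integral\<^sup>L lborel (\<lambda>z. indicator (ball a r) z * W z)"
  have IW: "IW < pi * r\<^sup>2"
    unfolding IW_def by (rule integral_ball_less[OF continuous_W r_pos W1 z0])
  have "0 \<le> IW"
    unfolding IW_def by (rule Bochner_Integration.integral_nonneg) (simp add: indicator_def W_nonneg)
  have "IW / (pi * r\<^sup>2) < 1"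
    using IW r_pos by simp
  then show "L_index \<phi> a r < 1"
    using L_index_le unfolding IW_def[symmetric] by linarith
  define t where "t = (pi * r\<^sup>2 - IW) / (3 * (pi * r\<^sup>2))"
  have t: "0 < t" "t \<le> 1" "(1 + t)\<^sup>2 * IW \<le> pi * r\<^sup>2"
  proof -
    show "0 < t" "t \<le> 1"
      using IW \<open>0 \<le> IW\<close> r_pos unfolding t_def by (auto simp: field_simps)
    then have "(1 + t)\<^sup>2 * IW \<le> (1 + 3 * t) * IW"
      using \<open>0 \<le> IW\<close> by (intro mult_right_mono) (auto simp: power2_eq_square algebra_simps mult_left_le_one_le)
    also have "\<dots> = IW + (pi * r\<^sup>2 - IW) * (IW / (pi * r\<^sup>2))"
      unfolding t_def using r_pos by (simp add: field_simps)
    also have "\<dots> \<le> IW + (pi * r\<^sup>2 - IW) * 1"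
      using IW \<open>0 \<le> IW\<close> r_pos by (intro add_left_mono mult_left_mono) auto
    finally show "(1 + t)\<^sup>2 * IW \<le> pi * r\<^sup>2"
      by simp
  qed
  define F2 where "F2 z = F z * (1 + of_real (t / r) * (z - a))" for z
  have holF2: "F2 holomorphic_on ball a r"
    unfolding F2_def by (intro holomorphic_intros holomorphic_F)
  have bound: "(\<integral>\<^sup>+ z \<in> ball a r. ennreal ((cmod (g z))\<^sup>2 * exp (- \<phi> z)) \<partial>lborel) \<le> ennreal (pi * r\<^sup>2 * exp (- \<phi> a))"
    if "g = F \<or> g = F2" for g
  proof -
    have "cmod (g z / F z) \<le> 1 + t" if "z \<in> ball a r" for z
    proof -
      have "cmod (of_real (t / r) * (z - a)) = t / r * cmod (z - a)"
        using t r_pos by (simp add: norm_mult norm_divide)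
      also have "\<dots> \<le> t / r * r"
        using that t r_pos by (intro mult_left_mono) (auto simp: dist_norm norm_minus_commute)
      finally have "cmod (of_real (t / r) * (z - a)) \<le> t"
        using r_pos by simp
      then show ?thesis
        using \<open>g = F \<or> g = F2\<close> F_nonzero[OF that] t norm_triangle_ineq[of 1 "of_real (t / r) * (z - a)"]
        unfolding F2_def by auto
    qed
    then have "(\<integral>\<^sup>+ z \<in> ball a r. ennreal (W z * (cmod (g z / F z))\<^sup>2) \<partial>lborel) \<le>
        (\<integral>\<^sup>+ z \<in> ball a r. ennreal (W z * (1 + t)\<^sup>2) \<partial>lborel)"
      by (intro nn_integral_mono) (auto simp: indicator_def W_nonneg ennreal_leI mult_left_mono power_mono)
    also have "\<dots> = ennreal ((1 + t)\<^sup>2 * IW)"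
      unfolding IW_def by (rule nn_integral_W_eq) simp
    also have "\<dots> \<le> ennreal (pi * r\<^sup>2)"
      using t(3) by (rule ennreal_leI)
    finally have "ennreal (exp (- \<phi> a)) * (\<integral>\<^sup>+ z \<in> ball a r. ennreal (W z * (cmod (g z / F z))\<^sup>2) \<partial>lborel)
        \<le> ennreal (exp (- \<phi> a)) * ennreal (pi * r\<^sup>2)"
      by (rule mult_left_mono) simp
    moreover have "g holomorphic_on ball a r"
      using that holomorphic_F holF2 by auto
    ultimately show ?thesis
      by (simp only: weighted_nn_integral_eq) (simp add: ennreal_mult'[symmetric] mult_ac)
  qed
  show "\<not> unique_optimal_L2_extension \<phi> a r"
  proof
    assume "unique_optimal_L2_extension \<phi> a r"
    then obtain f where f: "\<And>g. g holomorphic_on ball a r \<Longrightarrow> g a = 1 \<Longrightarrow>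
        (\<integral>\<^sup>+ z \<in> ball a r. ennreal ((cmod (g z))\<^sup>2 * exp (- \<phi> z)) \<partial>lborel) \<le> ennreal (pi * r\<^sup>2 * exp (- \<phi> a))
        \<Longrightarrow> \<forall>z \<in> ball a r. g z = f z"
      unfolding unique_optimal_L2_extension_def by blast
    define z1 where "z1 = a + of_real (r / 2)"
    have z1: "z1 \<in> ball a r" "z1 \<noteq> a"
      using r_pos unfolding z1_def by (auto simp: dist_norm)
    have "F z1 = F2 z1"
      using f[OF holomorphic_F F_centre bound] f[OF holF2 _ bound] z1(1) F_centre
      unfolding F2_def by auto
    then show False
      using F_nonzero[OF z1(1)] z1(2) t r_pos unfolding F2_def by auto
  qed
qed


lemma superunit_weight:
  assumes \<eta>: "\<eta> > 0" and W1: "\<And>z. z \<in> ball a r \<Longrightarrow> 1 \<le> W z"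
    and W2: "\<And>z. z \<in> ball a r \<Longrightarrow> r / 2 \<le> cmod (z - a) \<Longrightarrow> 1 + \<eta> \<le> W z"
  shows "L_index \<phi> a r > 1" and "\<not> unique_optimal_L2_extension \<phi> a r"
proof -
  define q where "q = 1 + 3 * \<eta> / 4"
  have "q > 1"
    using \<eta> unfolding q_def by simp
  have lower: "ennreal (pi * r\<^sup>2 * q) \<le> (\<integral>\<^sup>+ z \<in> ball a r. ennreal (W z * (cmod (k z))\<^sup>2) \<partial>lborel)"
    if "k holomorphic_on ball a r" "k a = 1" for k
    unfolding q_def using that r_pos \<eta> W1 W2 by (intro nn_integral_ball_weighted_norm_sq_ge) auto
  show "L_index \<phi> a r > 1"
    using L_index_ge[OF lower] \<open>q > 1\<close> by linarith
  show "\<not> unique_optimal_L2_extension \<phi> a r"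
  proof
    assume "unique_optimal_L2_extension \<phi> a r"
    then obtain f where f: "f holomorphic_on ball a r" "f a = 1"
      "(\<integral>\<^sup>+ z \<in> ball a r. ennreal ((cmod (f z))\<^sup>2 * exp (- \<phi> z)) \<partial>lborel) \<le> ennreal (pi * r\<^sup>2 * exp (- \<phi> a))"
      unfolding unique_optimal_L2_extension_def by blast
    have "(\<lambda>z. f z / F z) holomorphic_on ball a r"
      using f(1) holomorphic_F F_nonzero by (intro holomorphic_intros)
    from lower[OF this] have "ennreal (exp (- \<phi> a)) * ennreal (pi * r\<^sup>2 * q) \<le> ennreal (pi * r\<^sup>2 * exp (- \<phi> a))"
      using f(2,3) F_centre unfolding weighted_nn_integral_eq[OF f(1)]
      by (auto intro: order_trans[OF mult_left_mono])
    then have "pi * r\<^sup>2 * q \<le> pi * r\<^sup>2"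
      using r_pos by (simp add: ennreal_mult'[symmetric] mult_ac)
    then show False
      using \<open>q > 1\<close> r_pos by simp
  qed
qed

end

lemma harmonic_on_disc:
  fixes \<phi> :: "complex \<Rightarrow> real"
  assumes \<Omega>: "open \<Omega>" and sm: "smooth_on \<Omega> \<phi>" and harm: "harmonic_on \<Omega> \<phi>"
    and ar: "(a, r) \<in> Omega_delta \<Omega>"
  shows "L_index \<phi> a r = 1" and "unique_optimal_L2_extension \<phi> a r"
proof -
  obtain R where r: "0 < r" "r < R" and R: "ball a R \<subseteq> \<Omega>"
    using ar unfolding Omega_delta_iff by blast
  obtain h where h: "h holomorphic_on ball a R" "\<And>z. z \<in> ball a R \<Longrightarrow> Re (h z) = \<phi> z"
    using harmonic_on_ball_eq_Re_holomorphic[OF \<Omega> R smooth_on_differentiable[OF sm] harm] by blast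
  define F where "F z = exp ((h z - h a) / 2)" for z
  interpret disc_weight_factorization \<phi> a r F "\<lambda>_. 1"
  proof
    have "h holomorphic_on ball a r"
      using h(1) by (rule holomorphic_on_subset) (use r in auto)
    then show "F holomorphic_on ball a r"
      unfolding F_def by (intro holomorphic_intros) auto
    fix z assume "z \<in> ball a r"
    then have "Re (h z) = \<phi> z" "Re (h a) = \<phi> a"
      using h(2) r by auto
    then show "(cmod (F z))\<^sup>2 * exp (- \<phi> z) = exp (- \<phi> a) * 1"
      unfolding F_def norm_exp_eq_Re by (simp add: power2_eq_square flip: exp_add)
  qed (use r in \<open>simp_all add: F_def\<close>)
  show "L_index \<phi> a r = 1" "unique_optimal_L2_extension \<phi> a r"
    by (rule unit_weight; simp)+
qed

lemma nonharmonic_point_disc: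
  fixes \<phi> :: "complex \<Rightarrow> real"
  assumes \<Omega>: "open \<Omega>" and sm: "smooth_on \<Omega> \<phi>" and a: "a \<in> \<Omega>" and lap: "laplacian \<phi> a \<noteq> 0"
  obtains r where "(a, r) \<in> Omega_delta \<Omega>" "L_index \<phi> a r \<noteq> 1" "\<not> unique_optimal_L2_extension \<phi> a r"
proof -
  define c where "c = laplacian \<phi> a / 4"
  have "c \<noteq> 0"
    using lap unfolding c_def by simp
  obtain R F where R: "R > 0" "ball a R \<subseteq> \<Omega>" and F: "F holomorphic_on UNIV" "F a = 1" "\<And>z. F z \<noteq> 0"
    and expansion: "\<And>z. z \<in> ball a R \<Longrightarrow>
       \<bar>ln ((cmod (F z))\<^sup>2 * exp (\<phi> a - \<phi> z)) + c * (cmod (z - a))\<^sup>2\<bar> \<le> \<bar>c\<bar> / 2 * (cmod (z - a))\<^sup>2"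
    by (rule nonharmonic_weight_expansion[OF \<Omega> a sm, folded c_def, OF \<open>c \<noteq> 0\<close>]) (rule that)
  define r where "r = R / 2"
  have r: "0 < r" "r < R"
    using R unfolding r_def by auto
  have ar: "(a, r) \<in> Omega_delta \<Omega>"
    unfolding Omega_delta_iff using a r R by blast
  define W where "W z = (cmod (F z))\<^sup>2 * exp (\<phi> a - \<phi> z)" for z
  interpret disc_weight_factorization \<phi> a r F W
  proof
    show "F holomorphic_on ball a r"
      using F(1) by (rule holomorphic_on_subset) simp
    have "cball a r \<subseteq> ball a R"
      using r by auto
    then have "cball a r \<subseteq> \<Omega>"
      using R(2) by (rule order_trans)
    then have "continuous_on (cball a r) \<phi>"
      using differentiable_imp_continuous_on[OF smooth_on_differentiable(1)[OF sm]]
      by (rule continuous_on_subset[rotated])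
    moreover have "continuous_on (cball a r) F"
      using holomorphic_on_imp_continuous_on[OF F(1)] by (rule continuous_on_subset) simp
    ultimately show "continuous_on (cball a r) W"
      unfolding W_def by (intro continuous_intros)
    show "(cmod (F z))\<^sup>2 * exp (- \<phi> z) = exp (- \<phi> a) * W z" for z
      unfolding W_def by (simp add: mult_ac flip: exp_add)
  qed (use r F in auto)
  have W_pos: "W z > 0" for z
    using F(3) unfolding W_def by simp
  have lnW: "\<bar>ln (W z) + c * (cmod (z - a))\<^sup>2\<bar> \<le> \<bar>c\<bar> / 2 * (cmod (z - a))\<^sup>2" if "z \<in> ball a r" for z
    using expansion[of z] that r unfolding W_def by auto
  show ?thesis
  proof (cases "c > 0")
    case True
    have W_le: "W z \<le> 1" if "z \<in> ball a r" for z
    proof -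
      have "0 \<le> c * (cmod (z - a))\<^sup>2"
        using True by simp
      then have "ln (W z) \<le> 0"
        using lnW[OF that] unfolding abs_le_iff abs_of_pos[OF True] by linarith
      then show ?thesis
        using W_pos[of z] by simp
    qed
    define z1 where "z1 = a + of_real (r / 2)"
    have z1: "z1 \<in> ball a r" "cmod (z1 - a) = r / 2"
      using r unfolding z1_def by (simp_all add: dist_norm)
    have "0 < c * (cmod (z1 - a))\<^sup>2"
      using True r unfolding z1(2) by simp
    then have "ln (W z1) < 0"
      using lnW[OF z1(1)] unfolding abs_le_iff abs_of_pos[OF True] by linarith
    then have W_less: "W z1 < 1"
      using W_pos[of z1] by simp
    from subunit_weight[OF W_le z1(1) W_less] show ?thesis
      by (intro that[OF ar]) auto
  next
    case False
    then have "c < 0"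
      using \<open>c \<noteq> 0\<close> by simp
    define \<eta> where "\<eta> = - c / 2 * (r / 2)\<^sup>2"
    have "\<eta> > 0"
      using \<open>c < 0\<close> r unfolding \<eta>_def by (simp add: mult_neg_pos)
    have lower: "- c / 2 * (cmod (z - a))\<^sup>2 \<le> ln (W z)" if "z \<in> ball a r" for z
      using lnW[OF that] \<open>c < 0\<close> by (simp add: abs_le_iff)
    have W_ge: "1 \<le> W z" if "z \<in> ball a r" for z
    proof -
      have "0 \<le> - c / 2 * (cmod (z - a))\<^sup>2"
        using \<open>c < 0\<close> by (intro mult_nonneg_nonneg) auto
      then have "0 \<le> ln (W z)"
        using lower[OF that] by linarith
      then show ?thesis
        using W_pos[of z] by simp
    qed
    have W_ge_annulus: "1 + \<eta> \<le> W z" if "z \<in> ball a r" "r / 2 \<le> cmod (z - a)" for z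
    proof -
      have "\<eta> \<le> - c / 2 * (cmod (z - a))\<^sup>2"
        unfolding \<eta>_def using \<open>c < 0\<close> that(2) r by (intro mult_left_mono power_mono) auto
      then have "\<eta> \<le> ln (W z)"
        using lower[OF that(1)] by linarith
      then have "exp \<eta> \<le> W z"
        using W_pos[of z] by (simp add: ln_ge_iff)
      then show ?thesis
        using exp_ge_add_one_self[of \<eta>] by linarith
    qed
    from superunit_weight[OF \<open>\<eta> > 0\<close> W_ge W_ge_annulus] show ?thesis
      by (intro that[OF ar]) auto
  qed
qed

theorem theorem1p7:
  fixes \<Omega> :: "complex set" and \<phi> :: "complex \<Rightarrow> real"
  assumes "open \<Omega>" and "connected \<Omega>" and "\<Omega> \<noteq> {}"
    and "smooth_on \<Omega> \<phi>"
  shows "(harmonic_on \<Omega> \<phi> \<longleftrightarrow> (\<forall>(a, r) \<in> Omega_delta \<Omega>. L_index \<phi> a r = 1))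
       \<and> (harmonic_on \<Omega> \<phi> \<longleftrightarrow>
          (\<forall>(a, r) \<in> Omega_delta \<Omega>.
             \<exists>f. f holomorphic_on ball a r \<and> f a = 1 \<and>
               (\<integral>\<^sup>+ z \<in> ball a r. ennreal ((cmod (f z))\<^sup>2 * exp (- \<phi> z)) \<partial>lborel)
                 \<le> ennreal (pi * r\<^sup>2 * exp (- \<phi> a)) \<and>
               (\<forall>g. g holomorphic_on ball a r \<and> g a = 1 \<and>
                  (\<integral>\<^sup>+ z \<in> ball a r. ennreal ((cmod (g z))\<^sup>2 * exp (- \<phi> z)) \<partial>lborel)
                    \<le> ennreal (pi * r\<^sup>2 * exp (- \<phi> a))
                  \<longrightarrow> (\<forall>z \<in> ball a r. g z = f z))))"
proof -
  have nonharmonic: "\<exists>(a, r) \<in> Omega_delta \<Omega>. L_index \<phi> a r \<noteq> 1 \<and> \<not> unique_optimal_L2_extension \<phi> a r"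
    if nh: "\<not> harmonic_on \<Omega> \<phi>"
  proof -
    obtain a where "a \<in> \<Omega>" "laplacian \<phi> a \<noteq> 0"
      using nh unfolding harmonic_on_def by blast
    from nonharmonic_point_disc[OF assms(1,4) this] show ?thesis
      by blast
  qed
  have "harmonic_on \<Omega> \<phi> \<longleftrightarrow> (\<forall>(a, r) \<in> Omega_delta \<Omega>. L_index \<phi> a r = 1)"
    using harmonic_on_disc(1)[OF assms(1,4)] nonharmonic by blast
  moreover have "harmonic_on \<Omega> \<phi> \<longleftrightarrow> (\<forall>(a, r) \<in> Omega_delta \<Omega>. unique_optimal_L2_extension \<phi> a r)"
    using harmonic_on_disc(2)[OF assms(1,4)] nonharmonic by blast
  ultimately show ?thesis
    unfolding unique_optimal_L2_extension_def by (rule conjI)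
qed

end
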